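(* Let $n\ge3$ and $1\le s\le n-1$. Let $I,J\subseteq\{1,\dots,n\}$ with $|I|=s$, $|J|=s+1$, $n\in J$; put $m(J):=\max(J\setminus\{n\})$, and let $i\in CI$ and $j\in J\setminus\{m(J)\}$. Then $\theta_{m(J),j}(J)\in(1+\mathfrak a_{n,s})^*$ and $$\deg_{n,I,i}\big(\theta_{m(J),j}(J)\big)=\begin{cases}-1,& I=J\setminus\{m(J)\},\ i=m(J),\\ 1,& I=J\setminus\{j\},\ i=j,\\ 0,&\text{otherwise}.\end{cases}$$
   Context: $K$ is a field, $\mathbb N=\{0,1,\dots\}$. $\mathbb S_n$: $K$-algebra generated by $x_1,\dots,x_n,y_1,\dots,y_n$ with relations $y_ix_i=1$, $[x_i,y_j]=[x_i,x_j]=[y_i,y_j]=0$ ($i\neq j$). $E_{st}(i):=x_i^sy_i^t-x_i^{s+1}y_i^{t+1}$, $e_i:=E_{00}(i)$, $e_I:=\prod_{i\in I}e_i$, $E_{\alpha\beta}(I):=\prod_{i\in I}E_{\alpha_i\beta_i}(i)$. $\theta_{ij}(J):=(1+(y_i-1)e_{J\setminus\{i\}})(1+(x_j-1)e_{J\setminus\{j\}})$. $\mathfrak p_i$ = ideal generated by $e_i$, $\mathfrak p_I:=\prod_{i\in I}\mathfrak p_i$, $\mathfrak a_{n,s}:=\sum_{|I|=s}\mathfrak p_I$, $\mathfrak a_{n,n+1}:=0$; $(1+\mathfrak b)^*$ = units of $\mathbb S_n$ in $1+\mathfrak b$. $CI$ = complement of $I$; $\mathbb S_{CI}$ = subalgebra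 generated by $x_k,y_k$, $k\in CI$; $L_{CI}:=K[x_k^{\pm1}:k\in CI]$, with surjection $\mathbb S_{CI}\to L_{CI}$, $x_k\mapsto x_k$, $y_k\mapsto x_k^{-1}$ (kernel generated by the $e_k$, $k\in CI$). Definition of $\det_I$ and $\deg_{n,I,i}$ for $|I|=s<n$: let $\pi:K+\mathfrak a_{n,s}\to Q:=(K+\mathfrak a_{n,s})/\mathfrak a_{n,s+1}$. Then $Q=K\oplus\bigoplus_{|I'|=s}\overline{\mathfrak p}_{I'}$ with $\overline{\mathfrak p}_{I'}$ the image of $\mathfrak p_{I'}$, $\overline{\mathfrak p}_{I'}\overline{\mathfrak p}_{I''}=0$ for $I'\ne I''$, and $\overline{\mathfrak p}_{I}\simeq M_\infty(L_{CI})$ (finitary $\mathbb N^I\times\mathbb N^I$ matrices) via $\overline{aE_{\alpha\beta}(I)}\mapsto\bar a E_{\alpha\beta}$, $a\in\mathbb S_{CI}$. For $u\in(1+\mathfrak a_{n,s})^*$ write $\pi(u)=1+\sum_{|I'|=s}\bar u_{I'}$, $\bar u_{I'}\in\overline{\mathfrak p}_{I'}$; then $1+\bar u_I$ corresponds to a matrix in $\mathrm{GL}_\infty(L_{CI})$ and $\det_I(u)\in L_{CI}^*$ is its determinant; $\det_I:(1+\mathfrak a_{n,s})^*\to L_{CI}^*$ is a group homomorphism. Since $L_{CI}^*=\{\lambda\prod_{k\in CI}x_k^{\alpha_k}:\lambda\in K^*,\alpha_k\in\mathbb Z\}$, for $i\in CI$ define $\deg_{n,I,i}(u):=$ the exponent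 $\alpha_i$ of $x_i$ in $\det_I(u)$. *)

theory Defs
  imports "HOL-Library.Function_Algebras" "HOL-Library.Poly_Mapping"
          "HOL-Combinatorics.Permutations"
begin

section \<open>The Jacobson algebra S_n in its monomial (normal form) model\<close>

text \<open>A monomial x^alpha y^beta (alpha, beta : exponent vectors, indexed by nat;
  in S_n they vanish outside {1..n}).  Multiplication of monomials uses
  (x^a y^b)(x^c y^d) = x^(a + (c - b)) y^(d + (b - c)) in each coordinate, which
  encodes the relations y_i x_i = 1 and commutation of distinct indices.\<close>

type_synonym mono = "(nat \<Rightarrow> nat) \<times> (nat \<Rightarrow> nat)"
type_synonym 'k sel = "mono \<Rightarrow> 'k"

definition supp :: "('a \<Rightarrow> 'k::zero) \<Rightarrow> 'a set" where
  "supp f = {m. f m \<noteq> 0}"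

definition mmul :: "mono \<Rightarrow> mono \<Rightarrow> mono" where
  "mmul p q = ((\<lambda>k. fst p k + (fst q k - snd p k)), (\<lambda>k. snd q k + (snd p k - fst q k)))"

definition smul :: "'k::comm_ring_1 sel \<Rightarrow> 'k sel \<Rightarrow> 'k sel" where
  "smul f g = (\<lambda>m. \<Sum>pq \<in> {pq \<in> supp f \<times> supp g. mmul (fst pq) (snd pq) = m}.
                       f (fst pq) * g (snd pq))"

definition mono1 :: mono where "mono1 = ((\<lambda>_. 0), (\<lambda>_. 0))"

definition sone :: "'k::comm_ring_1 sel" where
  "sone = (\<lambda>m. if m = mono1 then 1 else 0)"

definition delta :: "nat \<Rightarrow> nat \<Rightarrow> nat" where
  "delta i = (\<lambda>k. if k = i then 1 else 0)"

definition sx :: "nat \<Rightarrow> 'k::comm_ring_1 sel" where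
  "sx i = (\<lambda>m. if m = (delta i, (\<lambda>_. 0)) then 1 else 0)"

definition sy :: "nat \<Rightarrow> 'k::comm_ring_1 sel" where
  "sy i = (\<lambda>m. if m = ((\<lambda>_. 0), delta i) then 1 else 0)"

definition spow :: "'k::comm_ring_1 sel \<Rightarrow> nat \<Rightarrow> 'k sel" where
  "spow f k = ((smul f) ^^ k) sone"

definition sprod_list :: "'k::comm_ring_1 sel list \<Rightarrow> 'k sel" where
  "sprod_list fs = foldr smul fs sone"

definition mono_on :: "nat set \<Rightarrow> mono \<Rightarrow> bool" where
  "mono_on C m \<longleftrightarrow> (\<forall>k. k \<notin> C \<longrightarrow> fst m k = 0 \<and> snd m k = 0)"

definition SC :: "nat set \<Rightarrow> 'k::comm_ring_1 sel set" where
  "SC C = {f. finite (supp f) \<and> (\<forall>m \<in> supp f. mono_on C m)}"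

abbreviation Sn :: "nat \<Rightarrow> 'k::comm_ring_1 sel set" where
  "Sn n \<equiv> SC {1..n}"

definition EE :: "nat \<Rightarrow> nat \<Rightarrow> nat \<Rightarrow> 'k::comm_ring_1 sel" where
  "EE s t i = smul (spow (sx i) s) (spow (sy i) t)
              - smul (spow (sx i) (s + 1)) (spow (sy i) (t + 1))"

definition ee :: "nat \<Rightarrow> 'k::comm_ring_1 sel" where
  "ee i = EE 0 0 i"

definition eI :: "nat set \<Rightarrow> 'k::comm_ring_1 sel" where
  "eI I = sprod_list (map ee (sorted_list_of_set I))"

definition EI :: "(nat \<Rightarrow> nat) \<Rightarrow> (nat \<Rightarrow> nat) \<Rightarrow> nat set \<Rightarrow> 'k::comm_ring_1 sel" where
  "EI \<alpha> \<beta> I = sprod_list (map (\<lambda>i. EE (\<alpha> i) (\<beta> i) i) (sorted_list_of_set I))"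

definition theta :: "nat \<Rightarrow> nat \<Rightarrow> nat set \<Rightarrow> 'k::comm_ring_1 sel" where
  "theta i j J = smul (sone + smul (sy i - sone) (eI (J - {i})))
                      (sone + smul (sx j - sone) (eI (J - {j})))"

inductive_set addcl :: "'k::comm_ring_1 sel set \<Rightarrow> 'k sel set" for X where
  zero: "0 \<in> addcl X"
| base: "x \<in> X \<Longrightarrow> x \<in> addcl X"
| add:  "a \<in> addcl X \<Longrightarrow> b \<in> addcl X \<Longrightarrow> a + b \<in> addcl X"

definition ideal_gen :: "nat \<Rightarrow> 'k::comm_ring_1 sel set \<Rightarrow> 'k sel set" where
  "ideal_gen n G = addcl {smul (smul a g) b | a g b. a \<in> Sn n \<and> g \<in> G \<and> b \<in> Sn n}"

definition pid :: "nat \<Rightarrow> nat \<Rightarrow> 'k::comm_ring_1 sel set" where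
  "pid n i = ideal_gen n {ee i}"

definition iprod :: "'k::comm_ring_1 sel set \<Rightarrow> 'k sel set \<Rightarrow> 'k sel set" where
  "iprod A B = addcl {smul a b | a b. a \<in> A \<and> b \<in> B}"

definition pI :: "nat \<Rightarrow> nat set \<Rightarrow> 'k::comm_ring_1 sel set" where
  "pI n I = foldr iprod (map (pid n) (sorted_list_of_set I)) (Sn n)"

text \<open>a_{n,s}; for s = n+1 there is no such I, so this is the zero ideal.\<close>
definition aid :: "nat \<Rightarrow> nat \<Rightarrow> 'k::comm_ring_1 sel set" where
  "aid n s = addcl (\<Union> {pI n I | I. I \<subseteq> {1..n} \<and> card I = s})"

definition sunit :: "nat \<Rightarrow> 'k::comm_ring_1 sel \<Rightarrow> bool" where
  "sunit n u \<longleftrightarrow> u \<in> Sn n \<and> (\<exists>v \<in> Sn n. smul u v = sone \<and> smul v u = sone)"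

definition one_plus_units :: "nat \<Rightarrow> 'k::comm_ring_1 sel set \<Rightarrow> 'k sel set" where
  "one_plus_units n B = {u. sunit n u \<and> u - sone \<in> B}"

section \<open>Laurent polynomials L_C and the surjection S_C -> L_C\<close>

type_synonym 'k lau = "(nat \<Rightarrow>\<^sub>0 int) \<Rightarrow>\<^sub>0 'k"

definition expo :: "mono \<Rightarrow> (nat \<Rightarrow>\<^sub>0 int)" where
  "expo m = Abs_poly_mapping (\<lambda>k. int (fst m k) - int (snd m k))"

text \<open>x_k \<mapsto> x_k, y_k \<mapsto> x_k^{-1}: the monomial x^a y^b goes to x^(a-b).\<close>
definition lphi :: "'k::comm_ring_1 sel \<Rightarrow> 'k lau" where
  "lphi f = (\<Sum>m \<in> supp f. Poly_Mapping.single (expo m) (f m))"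

text \<open>Finitary determinant of 1 + M, M a finitary matrix indexed by N^I.\<close>
definition fdet :: "((nat \<Rightarrow> nat) \<Rightarrow> (nat \<Rightarrow> nat) \<Rightarrow> 'a::comm_ring_1) \<Rightarrow> 'a" where
  "fdet M = (let F = {\<alpha>. \<exists>\<beta>. M \<alpha> \<beta> \<noteq> 0 \<or> M \<beta> \<alpha> \<noteq> 0} in
     \<Sum>p \<in> {p. p permutes F}. of_int (sign p) *
        (\<Prod>a \<in> F. (if p a = a then 1 else 0) + M a (p a)))"

text \<open>A: a finitary N^I x N^I matrix over S_{CI} such that
  u - 1 \<equiv> sum A_{alpha beta} E_{alpha beta}(I) modulo the other components
  p_{I'} (|I'| = s, I' \<noteq> I) and a_{n,s+1}; i.e. its image represents the
  component bar-u_I of pi(u) - 1 in bar-p_I.\<close>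
definition is_Irep :: "nat \<Rightarrow> nat set \<Rightarrow> 'k::comm_ring_1 sel
     \<Rightarrow> ((nat \<Rightarrow> nat) \<Rightarrow> (nat \<Rightarrow> nat) \<Rightarrow> 'k sel) \<Rightarrow> bool" where
  "is_Irep n I u A \<longleftrightarrow>
     (\<forall>\<alpha> \<beta>. A \<alpha> \<beta> \<in> SC ({1..n} - I)) \<and>
     finite {(\<alpha>, \<beta>). A \<alpha> \<beta> \<noteq> 0} \<and>
     (\<forall>\<alpha> \<beta>. A \<alpha> \<beta> \<noteq> 0 \<longrightarrow> (\<forall>k. k \<notin> I \<longrightarrow> \<alpha> k = 0 \<and> \<beta> k = 0)) \<and>
     (u - sone) - (\<Sum>(\<alpha>, \<beta>) \<in> {(\<alpha>, \<beta>). A \<alpha> \<beta> \<noteq> 0}. smul (A \<alpha> \<beta>) (EI \<alpha> \<beta> I))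
       \<in> addcl (\<Union> {pI n I' | I'. I' \<subseteq> {1..n} \<and> card I' = card I \<and> I' \<noteq> I}
                \<union> aid n (card I + 1))"

definition detI :: "nat \<Rightarrow> nat set \<Rightarrow> 'k::comm_ring_1 sel \<Rightarrow> 'k lau" where
  "detI n I u = (let A = (SOME A. is_Irep n I u A) in fdet (\<lambda>\<alpha> \<beta>. lphi (A \<alpha> \<beta>)))"

text \<open>Exponent of x_i in det_I(u) = lambda * prod x_k^{alpha_k}.\<close>
definition degI :: "nat \<Rightarrow> nat set \<Rightarrow> nat \<Rightarrow> 'k::comm_ring_1 sel \<Rightarrow> int" where
  "degI n I i u = Poly_Mapping.lookup (THE \<gamma>. \<exists>c. c \<noteq> 0 \<and> detI n I u = Poly_Mapping.single \<gamma> c) i"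

end

theory Submission
  imports Defs
begin

text \<open>
  Write \<open>m = max (J - {n})\<close>. Expanding the product gives \<open>\<theta>\<^sub>m\<^sub>j(J) - 1 =
  (y\<^sub>m - 1) e\<^bsub>J-m\<^esub> + (x\<^sub>j - 1) e\<^bsub>J-j\<^esub> + c\<close> with \<open>c\<close> in both \<open>\<pp>\<^bsub>J-m\<^esub>\<close> and \<open>\<pp>\<^bsub>J-j\<^esub>\<close>, and
  \<open>\<theta>\<^sub>m\<^sub>j(J)\<close> has the inverse \<open>\<theta>\<^sub>j\<^sub>m(J)\<close>. Hence the \<open>I\<close>-component of \<open>\<theta>\<^sub>m\<^sub>j(J)\<close> vanishes unless
  \<open>I = J - m\<close> or \<open>I = J - j\<close>, where it is the one-entry matrix \<open>y\<^sub>m - 1\<close> resp. \<open>x\<^sub>j - 1\<close>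
  (because \<open>E\<^sub>0\<^sub>0(I) = e\<^sub>I\<close>), of determinant \<open>x\<^sub>m\<^sup>-\<^sup>1\<close> resp. \<open>x\<^sub>j\<close>.

  The real work is to show that \<open>det\<^sub>I\<close>, defined through an arbitrary representing matrix, is
  determined by such a representative. To this end \<open>S\<^sub>n\<close> is identified with the monoid ring of its
  monomials, and a representation of that ring on \<open>K[\<int>\<^sup>\<nat>]\<close> is used in which the other components
  act as zero while the \<open>E\<^sub>\<alpha>\<^sub>\<beta>(I)\<close> act as matrix units: the image in \<open>L\<^sub>C\<^sub>I\<close> of every entry of
  a representing matrix can be read off from this action.
\<close>

section \<open>The monoid ring of monomials\<close>

lemma mmul_assoc: "mmul (mmul p q) r = mmul p (mmul q r)"
  unfolding mmul_def by (auto simp: fun_eq_iff)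

lemma mmul_mono1_left: "mmul mono1 q = q"
  and mmul_mono1_right: "mmul p mono1 = p"
  unfolding mmul_def mono1_def by (auto simp: fun_eq_iff)

text \<open>The monomials form a product of bicyclic monoids. Writing this monoid additively makes
  \<open>bicyc \<Rightarrow>\<^sub>0 'k\<close> a ring, and \<^const>\<open>smul\<close> becomes its multiplication.\<close>

typedef bicyc = "UNIV :: mono set" morphisms mono_of Abs_bicyc by simp

instantiation bicyc :: monoid_add
begin
definition plus_bicyc :: "bicyc \<Rightarrow> bicyc \<Rightarrow> bicyc" where
  "plus_bicyc p q = Abs_bicyc (mmul (mono_of p) (mono_of q))"
definition zero_bicyc :: bicyc where "zero_bicyc = Abs_bicyc mono1"
instance
  by standard (simp_all add: plus_bicyc_def zero_bicyc_def Abs_bicyc_inverse mono_of_inverse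
      mmul_assoc mmul_mono1_left mmul_mono1_right)
end

lemma Abs_bicyc_plus: "Abs_bicyc p + Abs_bicyc q = Abs_bicyc (mmul p q)"
  by (simp add: plus_bicyc_def Abs_bicyc_inverse)

lemma mono_of_plus: "mono_of (a + b) = mmul (mono_of a) (mono_of b)"
  by (simp add: plus_bicyc_def Abs_bicyc_inverse)

lemma mono_of_eq_iff: "mono_of b = m \<longleftrightarrow> b = Abs_bicyc m"
  by (metis Abs_bicyc_inverse mono_of_inverse UNIV_I)

definition to_mring :: "'k::comm_ring_1 sel \<Rightarrow> (bicyc \<Rightarrow>\<^sub>0 'k)" where
  "to_mring f = Abs_poly_mapping (\<lambda>b. f (mono_of b))"

lemma supp_Abs_bicyc: "{b. f (mono_of b) \<noteq> 0} = Abs_bicyc ` supp f"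
  by (auto simp: supp_def image_iff Abs_bicyc_inverse intro: mono_of_inverse[symmetric])

lemma finite_nonzero_mono_of: "finite (supp f) \<Longrightarrow> finite {b. f (mono_of b) \<noteq> 0}"
  by (simp add: supp_Abs_bicyc)

lemma lookup_to_mring: "finite (supp f) \<Longrightarrow> Poly_Mapping.lookup (to_mring f) b = f (mono_of b)"
  unfolding to_mring_def by (simp add: Abs_poly_mapping_inverse supp_Abs_bicyc)

lemma keys_to_mring: "finite (supp f) \<Longrightarrow> Poly_Mapping.keys (to_mring f) = Abs_bicyc ` supp f"
  by (auto simp: in_keys_iff lookup_to_mring supp_Abs_bicyc[symmetric])

lemma to_mring_inject:
  assumes "finite (supp f)" "finite (supp g)" "to_mring f = to_mring g"
  shows "f = g"
proof
  fix m
  have "Poly_Mapping.lookup (to_mring f) (Abs_bicyc m) = Poly_Mapping.lookup (to_mring g) (Abs_bicyc m)"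
    using assms(3) by simp
  then show "f m = g m" using assms(1,2) by (simp add: lookup_to_mring Abs_bicyc_inverse)
qed

lemma finite_supp_add:
  fixes f g :: "'k::comm_ring_1 sel"
  shows "finite (supp f) \<Longrightarrow> finite (supp g) \<Longrightarrow> finite (supp (f + g))"
  by (rule finite_subset[of _ "supp f \<union> supp g"]) (auto simp: supp_def)

lemma finite_supp_diff:
  fixes f g :: "'k::comm_ring_1 sel"
  shows "finite (supp f) \<Longrightarrow> finite (supp g) \<Longrightarrow> finite (supp (f - g))"
  by (rule finite_subset[of _ "supp f \<union> supp g"]) (auto simp: supp_def)

lemma finite_supp_zero: "finite (supp 0)"
  by (simp add: supp_def)

lemma finite_supp_sone: "finite (supp sone)"
  by (rule finite_subset[of _ "{mono1}"]) (auto simp: supp_def sone_def)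

lemma smul_zero_left: "smul 0 g = (0 :: 'k::comm_ring_1 sel)"
  by (simp add: smul_def supp_def fun_eq_iff)

lemma supp_smul_subset:
  "supp (smul f g) \<subseteq> (\<lambda>pq. mmul (fst pq) (snd pq)) ` (supp f \<times> supp g)"
proof
  fix m assume "m \<in> supp (smul f g)"
  then have "{pq \<in> supp f \<times> supp g. mmul (fst pq) (snd pq) = m} \<noteq> {}"
    unfolding smul_def supp_def by (intro notI) simp
  then show "m \<in> (\<lambda>pq. mmul (fst pq) (snd pq)) ` (supp f \<times> supp g)" by force
qed

lemma finite_supp_smul: "finite (supp f) \<Longrightarrow> finite (supp g) \<Longrightarrow> finite (supp (smul f g))"
  by (rule finite_subset[OF supp_smul_subset]) simp

lemma finite_supp_sum:
  fixes F :: "'a \<Rightarrow> 'k::comm_ring_1 sel"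
  shows "(\<And>x. x \<in> S \<Longrightarrow> finite (supp (F x))) \<Longrightarrow> finite (supp (sum F S))"
  by (induct S rule: infinite_finite_induct) (auto simp: finite_supp_zero finite_supp_add)

lemma to_mring_add:
  "finite (supp f) \<Longrightarrow> finite (supp g) \<Longrightarrow> to_mring (f + g) = to_mring f + to_mring g"
  by (rule poly_mapping_eqI) (simp add: lookup_to_mring finite_supp_add lookup_add)

lemma to_mring_diff:
  "finite (supp f) \<Longrightarrow> finite (supp g) \<Longrightarrow> to_mring (f - g) = to_mring f - to_mring g"
  by (rule poly_mapping_eqI) (simp add: lookup_to_mring finite_supp_diff lookup_minus)

lemma to_mring_zero: "to_mring 0 = 0"
  by (rule poly_mapping_eqI) (simp add: lookup_to_mring finite_supp_zero)

lemma to_mring_sone: "to_mring sone = 1"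
  by (rule poly_mapping_eqI)
    (simp add: lookup_to_mring[OF finite_supp_sone] lookup_one when_def zero_bicyc_def
      mono_of_eq_iff, simp add: sone_def mono_of_eq_iff)

lemma to_mring_sum:
  fixes F :: "'a \<Rightarrow> 'k::comm_ring_1 sel"
  shows "(\<And>x. x \<in> S \<Longrightarrow> finite (supp (F x))) \<Longrightarrow> to_mring (sum F S) = (\<Sum>x\<in>S. to_mring (F x))"
  by (induct S rule: infinite_finite_induct) (auto simp: to_mring_zero to_mring_add finite_supp_sum)

lemma to_mring_smul:
  assumes ff: "finite (supp f)" and fg: "finite (supp g)"
  shows "to_mring (smul f g) = to_mring f * to_mring g"
proof (rule poly_mapping_eqI)
  fix k
  let ?F = "Poly_Mapping.lookup (to_mring f)" and ?G = "Poly_Mapping.lookup (to_mring g)"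
  have "Poly_Mapping.lookup (to_mring f * to_mring g) k = prod_fun ?F ?G k"
    by (simp add: lookup_mult prod_fun_def)
  also have "\<dots> = (\<Sum>(a, b). ?F a * ?G b when k = a + b)"
    by (rule prod_fun_unfold_prod) (simp_all add: lookup_to_mring ff fg finite_nonzero_mono_of)
  also have "\<dots> = (\<Sum>ab \<in> Abs_bicyc ` supp f \<times> Abs_bicyc ` supp g.
      (\<lambda>(a, b). ?F a * ?G b when k = a + b) ab)"
    by (rule Sum_any.expand_superset)
      (use ff fg in \<open>auto simp: when_def lookup_to_mring supp_Abs_bicyc[symmetric] finite_nonzero_mono_of
        split: if_splits\<close>)
  also have "\<dots> = (\<Sum>pq \<in> supp f \<times> supp g.
      f (fst pq) * g (snd pq) when k = Abs_bicyc (fst pq) + Abs_bicyc (snd pq))"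
  proof -
    have "Abs_bicyc ` supp f \<times> Abs_bicyc ` supp g = map_prod Abs_bicyc Abs_bicyc ` (supp f \<times> supp g)"
      by (simp add: map_prod_surj_on)
    moreover have "inj_on (map_prod Abs_bicyc Abs_bicyc) (supp f \<times> supp g)"
      by (rule map_prod_inj_on) (auto intro: inj_onI simp: Abs_bicyc_inject)
    ultimately show ?thesis
      by (simp add: sum.reindex lookup_to_mring ff fg Abs_bicyc_inverse case_prod_beta)
  qed
  also have "\<dots> = (\<Sum>pq \<in> {pq \<in> supp f \<times> supp g. mmul (fst pq) (snd pq) = mono_of k}.
      f (fst pq) * g (snd pq))"
    using ff fg by (subst sum.inter_filter)
      (auto simp: when_def Abs_bicyc_plus mono_of_eq_iff Abs_bicyc_inverse mono_of_inverse
        intro!: sum.cong)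
  also have "\<dots> = Poly_Mapping.lookup (to_mring (smul f g)) k"
    by (subst lookup_to_mring[OF finite_supp_smul[OF ff fg]]) (simp add: smul_def)
  finally show "Poly_Mapping.lookup (to_mring (smul f g)) k
      = Poly_Mapping.lookup (to_mring f * to_mring g) k" by (rule sym)
qed

lemma SC_finite_supp: "f \<in> SC C \<Longrightarrow> finite (supp f)"
  by (simp add: SC_def)

lemma SC_add:
  assumes "f \<in> SC C" "g \<in> SC C"
  shows "f + g \<in> SC C"
proof -
  have "supp (f + g) \<subseteq> supp f \<union> supp g" by (auto simp: supp_def)
  then show ?thesis using assms finite_supp_add[of f g] unfolding SC_def by blast
qed

lemma SC_diff:
  assumes "f \<in> SC C" "g \<in> SC C"
  shows "f - g \<in> SC C"
proof -
  have "supp (f - g) \<subseteq> supp f \<union> supp g" by (auto simp: supp_def)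
  then show ?thesis using assms finite_supp_diff[of f g] unfolding SC_def by blast
qed

lemma SC_zero: "0 \<in> SC C"
  by (simp add: SC_def supp_def)

lemma SC_sone: "sone \<in> SC C"
  by (auto simp: SC_def finite_supp_sone supp_def sone_def mono_on_def mono1_def)

lemma SC_smul:
  assumes f: "f \<in> SC C" and g: "g \<in> SC C"
  shows "smul f g \<in> SC C"
proof -
  have "mono_on C (mmul p q)" if "p \<in> supp f" "q \<in> supp g" for p q
    using that f g by (auto simp: SC_def mono_on_def mmul_def)
  then have "\<forall>m\<in>supp (smul f g). mono_on C m"
    using supp_smul_subset[of f g] by fastforce
  then show ?thesis using f g by (simp add: SC_def finite_supp_smul)
qed

lemma SC_sx: "k \<in> C \<Longrightarrow> sx k \<in> SC C"
  by (auto simp: SC_def supp_def sx_def mono_on_def delta_def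
      intro: finite_subset[of _ "{(delta k, \<lambda>_. 0)}"])

lemma SC_sy: "k \<in> C \<Longrightarrow> sy k \<in> SC C"
  by (auto simp: SC_def supp_def sy_def mono_on_def delta_def
      intro: finite_subset[of _ "{(\<lambda>_. 0, delta k)}"])

lemma SC_spow: "f \<in> SC C \<Longrightarrow> spow f t \<in> SC C"
  by (induct t) (simp_all add: spow_def SC_sone SC_smul)

lemma SC_EE: "k \<in> C \<Longrightarrow> EE s t k \<in> SC C"
  by (simp add: EE_def SC_diff SC_smul SC_spow SC_sx SC_sy)

lemma SC_sprod_list: "(\<And>f. f \<in> set fs \<Longrightarrow> f \<in> SC C) \<Longrightarrow> sprod_list fs \<in> SC C"
  by (induct fs) (simp_all add: sprod_list_def SC_sone SC_smul)

lemma SC_eI: "finite I \<Longrightarrow> I \<subseteq> C \<Longrightarrow> eI I \<in> SC C"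
  unfolding eI_def ee_def by (rule SC_sprod_list) (auto simp: SC_EE)

lemma SC_mono: "C \<subseteq> C' \<Longrightarrow> SC C \<subseteq> SC C'"
  unfolding SC_def mono_on_def by auto

lemma finite_supp_sx: "finite (supp (sx k))"
  using SC_sx[of k "{k}"] SC_finite_supp by blast

lemma finite_supp_sy: "finite (supp (sy k))"
  using SC_sy[of k "{k}"] SC_finite_supp by blast

lemma finite_supp_EE: "finite (supp (EE s t k))"
  using SC_EE[of k "{k}"] SC_finite_supp by blast

lemma finite_supp_spow: "finite (supp f) \<Longrightarrow> finite (supp (spow f t))"
  by (induct t) (simp_all add: spow_def finite_supp_sone finite_supp_smul)

lemma finite_supp_sprod_list:
  "(\<And>f. f \<in> set fs \<Longrightarrow> finite (supp f)) \<Longrightarrow> finite (supp (sprod_list fs))"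
  by (induct fs) (simp_all add: sprod_list_def finite_supp_sone finite_supp_smul)

lemma finite_supp_eI: "finite (supp (eI I))"
  unfolding eI_def ee_def by (rule finite_supp_sprod_list) (auto simp: finite_supp_EE)

lemma finite_supp_EI: "finite (supp (EI \<alpha> \<beta> I))"
  unfolding EI_def by (rule finite_supp_sprod_list) (auto simp: finite_supp_EE)

lemmas finite_supp_intros = finite_supp_smul finite_supp_add finite_supp_diff finite_supp_sone
  finite_supp_sx finite_supp_sy finite_supp_eI finite_supp_EI finite_supp_EE

definition rmono :: "(nat \<Rightarrow> nat) \<Rightarrow> (nat \<Rightarrow> nat) \<Rightarrow> (bicyc \<Rightarrow>\<^sub>0 'k::comm_ring_1)" where
  "rmono \<alpha> \<beta> = Poly_Mapping.single (Abs_bicyc (\<alpha>, \<beta>)) 1"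

lemma rmono_mult:
  "rmono a b * rmono c d = (rmono (\<lambda>k. a k + (c k - b k)) (\<lambda>k. d k + (b k - c k))
     :: bicyc \<Rightarrow>\<^sub>0 'k::comm_ring_1)"
  by (simp add: rmono_def mult_single Abs_bicyc_plus mmul_def)

lemma rmono_commute:
  assumes "\<And>l. (a l = 0 \<and> b l = 0) \<or> (c l = 0 \<and> d l = 0)"
  shows "rmono a b * rmono c d = (rmono c d * rmono a b :: bicyc \<Rightarrow>\<^sub>0 'k::comm_ring_1)"
proof -
  have "a k + (c k - b k) = c k + (a k - d k)" "d k + (b k - c k) = b k + (d k - a k)" for k
    using assms[of k] by auto
  then have "(\<lambda>k. a k + (c k - b k)) = (\<lambda>k. c k + (a k - d k))"
    and "(\<lambda>k. d k + (b k - c k)) = (\<lambda>k. b k + (d k - a k))"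
    by simp_all
  then show ?thesis by (simp add: rmono_mult)
qed

lemma rmono_zero: "rmono (\<lambda>_. 0) (\<lambda>_. 0) = 1"
  by (simp add: rmono_def zero_bicyc_def[symmetric] mono1_def[symmetric])

definition rx :: "nat \<Rightarrow> (bicyc \<Rightarrow>\<^sub>0 'k::comm_ring_1)" where
  "rx k = rmono (delta k) (\<lambda>_. 0)"

definition ry :: "nat \<Rightarrow> (bicyc \<Rightarrow>\<^sub>0 'k::comm_ring_1)" where
  "ry k = rmono (\<lambda>_. 0) (delta k)"

definition re :: "nat \<Rightarrow> (bicyc \<Rightarrow>\<^sub>0 'k::comm_ring_1)" where
  "re k = 1 - rmono (delta k) (delta k)"

definition rE :: "nat \<Rightarrow> nat \<Rightarrow> nat \<Rightarrow> (bicyc \<Rightarrow>\<^sub>0 'k::comm_ring_1)" where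
  "rE s t k = rmono (\<lambda>l. if l = k then s else 0) (\<lambda>l. if l = k then t else 0)
     - rmono (\<lambda>l. if l = k then s + 1 else 0) (\<lambda>l. if l = k then t + 1 else 0)"

lemma ry_rx: "ry k * rx k = 1"
  by (simp add: rx_def ry_def rmono_mult rmono_zero)

lemma rx_ry: "rx k * ry k = rmono (delta k) (delta k)"
  by (simp add: rx_def ry_def rmono_mult)

lemma rx_commute: "k \<noteq> l \<Longrightarrow> rx k * rx l = rx l * rx k"
  and ry_commute: "k \<noteq> l \<Longrightarrow> ry k * ry l = ry l * ry k"
  and rx_ry_commute: "k \<noteq> l \<Longrightarrow> rx k * ry l = ry l * rx k"
  unfolding rx_def ry_def by (auto intro!: rmono_commute simp: delta_def)

lemma re_commute_rx: "k \<noteq> l \<Longrightarrow> re k * rx l = rx l * re k"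
  and re_commute_ry: "k \<noteq> l \<Longrightarrow> re k * ry l = ry l * re k"
proof -
  assume "k \<noteq> l"
  then have "rmono (delta k) (delta k) * rx l = rx l * rmono (delta k) (delta k)"
    "rmono (delta k) (delta k) * ry l = ry l * rmono (delta k) (delta k)"
    unfolding rx_def ry_def by (auto intro!: rmono_commute simp: delta_def)
  then show "re k * rx l = rx l * re k" "re k * ry l = ry l * re k"
    by (simp_all add: re_def left_diff_distrib right_diff_distrib)
qed

lemma re_commute: "re k * re l = re l * re k"
proof -
  have "rmono (delta k) (delta k) * rmono (delta l) (delta l)
      = (rmono (delta l) (delta l) * rmono (delta k) (delta k) :: bicyc \<Rightarrow>\<^sub>0 'a)"
    by (cases "k = l") (simp, rule rmono_commute, simp add: delta_def)
  then show ?thesis by (simp add: re_def left_diff_distrib right_diff_distrib)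
qed

lemma re_idem: "re k * re k = re k"
proof -
  have "rmono (delta k) (delta k) * rmono (delta k) (delta k)
      = (rmono (delta k) (delta k) :: bicyc \<Rightarrow>\<^sub>0 'a)"
    by (simp add: rmono_mult)
  then show ?thesis by (simp add: re_def algebra_simps)
qed

lemma to_mring_sx: "to_mring (sx k) = rx k"
  by (rule poly_mapping_eqI) (subst lookup_to_mring[OF finite_supp_sx], auto simp: rx_def rmono_def
      lookup_single when_def sx_def mono_of_eq_iff)

lemma to_mring_sy: "to_mring (sy k) = ry k"
  by (rule poly_mapping_eqI) (subst lookup_to_mring[OF finite_supp_sy], auto simp: ry_def rmono_def
      lookup_single when_def sy_def mono_of_eq_iff)

lemma to_mring_spow: "finite (supp f) \<Longrightarrow> to_mring (spow f t) = to_mring f ^ t"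
proof (induct t)
  case 0
  then show ?case by (simp add: spow_def to_mring_sone)
next
  case (Suc t)
  then show ?case by (simp add: spow_def to_mring_smul finite_supp_spow[unfolded spow_def])
qed

lemma rx_power_ry_power:
  "rx k ^ s * ry k ^ t = rmono (\<lambda>l. if l = k then s else 0) (\<lambda>l. if l = k then t else 0)"
proof -
  have "rx k ^ s = (rmono (\<lambda>l. if l = k then s else 0) (\<lambda>_. 0) :: bicyc \<Rightarrow>\<^sub>0 'a)"
    by (induct s) (auto simp: rmono_zero rx_def rmono_mult delta_def intro!: arg_cong2[where f=rmono])
  moreover have "ry k ^ t = (rmono (\<lambda>_. 0) (\<lambda>l. if l = k then t else 0) :: bicyc \<Rightarrow>\<^sub>0 'a)"
    by (induct t) (auto simp: rmono_zero ry_def rmono_mult delta_def intro!: arg_cong2[where f=rmono])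
  ultimately show ?thesis by (simp add: rmono_mult)
qed

lemma to_mring_EE: "to_mring (EE s t k) = rE s t k"
  unfolding EE_def rE_def
  by (simp add: to_mring_diff to_mring_smul finite_supp_smul finite_supp_spow
      finite_supp_sx finite_supp_sy to_mring_spow to_mring_sx to_mring_sy rx_power_ry_power[symmetric])

lemma rE_0_0: "rE 0 0 k = re k"
proof -
  have "(\<lambda>l. if l = k then (0::nat) else 0) = (\<lambda>_. 0)"
    and "(\<lambda>l. if l = k then (0::nat) + 1 else 0) = delta k"
    by (auto simp: delta_def)
  then show ?thesis by (simp add: rE_def re_def rmono_zero)
qed

lemma to_mring_sprod_list:
  "(\<And>f. f \<in> set fs \<Longrightarrow> finite (supp f))
     \<Longrightarrow> to_mring (sprod_list fs) = foldr (*) (map to_mring fs) 1"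
proof (induct fs)
  case Nil
  then show ?case by (simp add: sprod_list_def to_mring_sone)
next
  case (Cons f fs)
  have "sprod_list (f # fs) = smul f (sprod_list fs)"
    by (simp add: sprod_list_def)
  then show ?case using Cons by (simp add: to_mring_smul finite_supp_sprod_list)
qed

lemma to_mring_eI: "to_mring (eI I) = foldr (*) (map re (sorted_list_of_set I)) 1"
  unfolding eI_def ee_def
  by (subst to_mring_sprod_list) (auto simp: finite_supp_EE to_mring_EE rE_0_0 comp_def)

lemma to_mring_EI:
  "to_mring (EI \<alpha> \<beta> I) = foldr (*) (map (\<lambda>k. rE (\<alpha> k) (\<beta> k) k) (sorted_list_of_set I)) 1"
  unfolding EI_def by (subst to_mring_sprod_list) (auto simp: finite_supp_EE to_mring_EE comp_def)

lemma foldr_mult_commute: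
  fixes z :: "'a::monoid_mult"
  shows "(\<And>x. x \<in> set L \<Longrightarrow> z * x = x * z) \<Longrightarrow> z * foldr (*) L 1 = foldr (*) L 1 * z"
  by (induct L) (simp_all, metis mult.assoc)

lemma foldr_mult_remove1:
  fixes f :: "'b \<Rightarrow> 'a::monoid_mult"
  assumes "x \<in> set L" and "\<And>y. y \<in> set L \<Longrightarrow> f x * f y = f y * f x"
  shows "foldr (*) (map f L) 1 = f x * foldr (*) (map f (remove1 x L)) 1"
  using assms
proof (induct L)
  case (Cons a L)
  show ?case
  proof (cases "a = x")
    case False
    then have "foldr (*) (map f (a # L)) 1 = f a * (f x * foldr (*) (map f (remove1 x L)) 1)"
      using Cons by simp
    also have "\<dots> = f x * (f a * foldr (*) (map f (remove1 x L)) 1)"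
      using Cons.prems(2)[of a] by (simp add: mult.assoc[symmetric])
    finally show ?thesis using False by simp
  qed simp
qed simp

lemma foldr_mult_idem:
  fixes f :: "'b \<Rightarrow> 'a::monoid_mult"
  assumes "\<And>x. x \<in> set L \<Longrightarrow> f x * f x = f x"
    and "\<And>x y. x \<in> set L \<Longrightarrow> y \<in> set L \<Longrightarrow> f x * f y = f y * f x"
  shows "foldr (*) (map f L) 1 * foldr (*) (map f L) 1 = foldr (*) (map f L) 1"
  using assms
proof (induct L)
  case (Cons a L)
  let ?p = "foldr (*) (map f L) 1"
  have "f a * ?p = ?p * f a"
    by (rule foldr_mult_commute) (use Cons.prems(2) in auto)
  then have "(f a * ?p) * (f a * ?p) = (f a * f a) * (?p * ?p)"
    by (metis mult.assoc)
  then show ?case using Cons by simp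
qed simp

lemma to_mring_eI_remove:
  "finite S \<Longrightarrow> k \<in> S \<Longrightarrow> to_mring (eI S) = re k * to_mring (eI (S - {k}))"
  unfolding to_mring_eI
  by (subst sorted_list_of_set_remove, simp, rule foldr_mult_remove1) (auto simp: re_commute)

lemma to_mring_eI_commute:
  assumes "finite S" "k \<notin> S"
  shows "to_mring (eI S) * rx k = rx k * to_mring (eI S)"
    and "to_mring (eI S) * ry k = ry k * to_mring (eI S)"
  unfolding to_mring_eI using assms
  by (auto intro!: foldr_mult_commute[symmetric] re_commute_rx[symmetric] re_commute_ry[symmetric])

lemma to_mring_eI_idem: "to_mring (eI S) * to_mring (eI S) = to_mring (eI S)"
  unfolding to_mring_eI by (rule foldr_mult_idem) (auto simp: re_idem re_commute)

section \<open>\<open>\<theta>\<^sub>i\<^sub>j(J)\<close> is a unit with inverse \<open>\<theta>\<^sub>j\<^sub>i(J)\<close>\<close>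

lemma theta_product_identity:
  fixes xi yi xj yj c :: "'a::ring_1"
  assumes "yi * xi = 1" "yj * xj = 1"
    and "xj * xi = xi * xj" "xj * yi = yi * xj" "yj * xi = xi * yj" "yj * yi = yi * yj"
    and "c * xi = xi * c" "c * yi = yi * c" "c * xj = xj * c" "c * yj = yj * c"
    and "c * c = c"
  shows "(1 + (yi - 1) * ((1 - xj * yj) * c)) * (1 + (xj - 1) * ((1 - xi * yi) * c)) *
         ((1 + (yj - 1) * ((1 - xi * yi) * c)) * (1 + (xi - 1) * ((1 - xj * yj) * c))) = 1"
proof -
  have "\<And>z. yi * (xi * z) = z" "\<And>z. yj * (xj * z) = z"
    "\<And>z. xj * (xi * z) = xi * (xj * z)" "\<And>z. xj * (yi * z) = yi * (xj * z)"
    "\<And>z. yj * (xi * z) = xi * (yj * z)" "\<And>z. yj * (yi * z) = yi * (yj * z)"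
    "\<And>z. c * (xi * z) = xi * (c * z)" "\<And>z. c * (yi * z) = yi * (c * z)"
    "\<And>z. c * (xj * z) = xj * (c * z)" "\<And>z. c * (yj * z) = yj * (c * z)"
    "\<And>z. c * (c * z) = c * z"
    using assms by (simp_all add: mult.assoc[symmetric])
  then show ?thesis by (simp add: algebra_simps assms)
qed

lemma re_conv_rx_ry: "re k = 1 - rx k * ry k"
  by (simp add: re_def rx_ry)

lemma to_mring_theta:
  assumes "finite J" "i \<in> J" "j \<in> J" "i \<noteq> j"
  shows "to_mring (theta i j J :: 'k::comm_ring_1 sel) =
    (1 + (ry i - 1) * ((1 - rx j * ry j) * to_mring (eI (J - {i, j})))) *
    (1 + (rx j - 1) * ((1 - rx i * ry i) * to_mring (eI (J - {i, j}))))"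
proof -
  have "to_mring (eI (J - {i}) :: 'k sel) = re j * to_mring (eI (J - {i} - {j}))"
    and "to_mring (eI (J - {j}) :: 'k sel) = re i * to_mring (eI (J - {j} - {i}))"
    using assms by (auto intro!: to_mring_eI_remove)
  moreover have "J - {i} - {j} = J - {i, j}" "J - {j} - {i} = J - {i, j}" by auto
  ultimately show ?thesis
    unfolding theta_def
    by (simp add: finite_supp_intros to_mring_smul to_mring_add to_mring_diff to_mring_sone
        to_mring_sx to_mring_sy re_conv_rx_ry)
qed

lemma finite_supp_theta: "finite (supp (theta i j J))"
  by (simp add: theta_def finite_supp_intros)

lemma theta_inverse:
  assumes "finite J" "i \<in> J" "j \<in> J" "i \<noteq> j"
  shows "smul (theta i j J) (theta j i J) = (sone :: 'k::comm_ring_1 sel)"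
proof (rule to_mring_inject)
  let ?c = "to_mring (eI (J - {i, j})) :: bicyc \<Rightarrow>\<^sub>0 'k"
  have "finite (J - {i, j})" "i \<notin> J - {i, j}" "j \<notin> J - {i, j}" using assms by auto
  note identity = theta_product_identity[of "ry i" "rx i" "ry j" "rx j" ?c, OF ry_rx ry_rx
      rx_commute[OF assms(4)[symmetric]] rx_ry_commute[OF assms(4)[symmetric]]
      rx_ry_commute[OF assms(4), symmetric] ry_commute[OF assms(4)[symmetric]]
      to_mring_eI_commute(1)[OF this(1,2)] to_mring_eI_commute(2)[OF this(1,2)]
      to_mring_eI_commute(1)[OF this(1,3)] to_mring_eI_commute(2)[OF this(1,3)]
      to_mring_eI_idem]
  have "J - {j, i} = J - {i, j}" by auto
  then have "to_mring (theta j i J :: 'k sel) =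
    (1 + (ry j - 1) * ((1 - rx i * ry i) * ?c)) * (1 + (rx i - 1) * ((1 - rx j * ry j) * ?c))"
    using to_mring_theta[of J j i] assms by simp
  then show "to_mring (smul (theta i j J) (theta j i J)) = to_mring (sone :: 'k sel)"
    using assms identity
    by (simp add: to_mring_smul finite_supp_theta to_mring_theta to_mring_sone)
qed (simp_all add: finite_supp_theta finite_supp_smul finite_supp_sone)

lemma SC_theta:
  assumes "finite J" "J \<subseteq> C" "i \<in> C" "j \<in> C"
  shows "theta i j J \<in> SC C"
  unfolding theta_def using assms
  by (intro SC_smul SC_add SC_sone SC_diff SC_sx SC_sy SC_eI) auto

lemma theta_sunit:
  assumes "J \<subseteq> {1..n}" "i \<in> J" "j \<in> J" "i \<noteq> j"
  shows "sunit n (theta i j J :: 'k::comm_ring_1 sel)"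
proof -
  have "finite J" using assms(1) finite_subset by blast
  then show ?thesis
    unfolding sunit_def using assms theta_inverse[of J i j] theta_inverse[of J j i]
    by (auto intro!: SC_theta)
qed

lemma addcl_subset: "X \<subseteq> SC C \<Longrightarrow> addcl X \<subseteq> SC C"
proof
  fix x assume X: "X \<subseteq> SC C" and x: "x \<in> addcl X"
  from x show "x \<in> SC C"
    by induct (use X SC_zero SC_add in blast)+
qed

lemma ideal_gen_subset: "G \<subseteq> Sn n \<Longrightarrow> ideal_gen n G \<subseteq> Sn n"
  unfolding ideal_gen_def by (rule addcl_subset) (auto intro!: SC_smul)

lemma pid_subset: "k \<in> {1..n} \<Longrightarrow> pid n k \<subseteq> Sn n"
  unfolding pid_def ee_def by (rule ideal_gen_subset) (simp add: SC_EE)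

lemma foldr_iprod_subset:
  "set L \<subseteq> {1..n} \<Longrightarrow> foldr iprod (map (pid n) L) (Sn n) \<subseteq> (Sn n :: 'k::comm_ring_1 sel set)"
proof (induct L)
  case (Cons k L)
  have "pid n k \<subseteq> (Sn n :: 'k sel set)"
    using Cons.prems by (intro pid_subset) simp
  moreover have "foldr iprod (map (pid n) L) (Sn n) \<subseteq> (Sn n :: 'k sel set)"
    using Cons by simp
  ultimately have "iprod (pid n k) (foldr iprod (map (pid n) L) (Sn n)) \<subseteq> (Sn n :: 'k sel set)"
    unfolding iprod_def by (intro addcl_subset) (blast intro: SC_smul)
  then show ?case by simp
qed simp

lemma iprod_base: "a \<in> A \<Longrightarrow> b \<in> B \<Longrightarrow> smul a b \<in> iprod A B"
  unfolding iprod_def by (blast intro: addcl.base)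

lemma foldr_iprod_mem:
  fixes g h :: "'k::comm_ring_1 sel"
  assumes "g \<in> Sn n" and "h \<in> Sn n"
  shows "smul (smul g (sprod_list (map ee L))) h \<in> foldr iprod (map (pid n) L) (Sn n)"
  using assms
proof (induct L arbitrary: g h)
  case Nil
  then show ?case by (simp add: sprod_list_def SC_smul SC_sone)
next
  case (Cons k L)
  let ?Q = "sprod_list (map ee L) :: 'k sel"
  have "smul (smul g (ee k)) sone \<in> pid n k"
    unfolding pid_def ideal_gen_def using Cons.prems(1) SC_sone by (blast intro: addcl.base)
  moreover have "smul (smul sone ?Q) h \<in> foldr iprod (map (pid n) L) (Sn n)"
    by (rule Cons.hyps[OF SC_sone Cons.prems(2)])
  moreover have "smul (smul g (sprod_list (map ee (k # L)))) h
      = smul (smul (smul g (ee k)) sone) (smul (smul sone ?Q) h)"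
  proof -
    have "finite (supp g)" "finite (supp h)" "finite (supp ?Q)" "finite (supp (ee k :: 'k sel))"
      using Cons.prems SC_finite_supp
      by (auto simp: ee_def intro!: finite_supp_sprod_list finite_supp_EE)
    moreover have "sprod_list (ee k # map ee L) = smul (ee k :: 'k sel) ?Q"
      by (simp add: sprod_list_def)
    ultimately show ?thesis
      by (intro to_mring_inject) (simp_all add: finite_supp_intros to_mring_smul to_mring_sone mult.assoc)
  qed
  ultimately show ?case by (simp add: iprod_base)
qed

lemma pI_mem: "g \<in> Sn n \<Longrightarrow> h \<in> Sn n \<Longrightarrow> smul (smul g (eI I)) h \<in> pI n I"
  unfolding pI_def eI_def by (rule foldr_iprod_mem)

lemma pI_subset_aid: "I \<subseteq> {1..n} \<Longrightarrow> card I = s \<Longrightarrow> pI n I \<subseteq> aid n s"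
  unfolding aid_def by (blast intro: addcl.base)

lemma aid_add: "x \<in> aid n s \<Longrightarrow> y \<in> aid n s \<Longrightarrow> x + y \<in> aid n s"
  unfolding aid_def by (rule addcl.add)

text \<open>The kernel of the projection of \<open>\<aa>\<^sub>n\<^sub>,\<^sub>s\<close> (\<open>s = |I|\<close>) onto its summand \<open>\<pp>\<^sub>I\<close>
  modulo \<open>\<aa>\<^sub>n\<^sub>,\<^sub>s\<^sub>+\<^sub>1\<close>; it is the ideal appearing in \<^const>\<open>is_Irep\<close>.\<close>

definition off_component :: "nat \<Rightarrow> nat set \<Rightarrow> 'k::comm_ring_1 sel set" where
  "off_component n I = addcl (\<Union> {pI n I' | I'. I' \<subseteq> {1..n} \<and> card I' = card I \<and> I' \<noteq> I}
     \<union> aid n (card I + 1))"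

lemma pI_subset_off_component:
  "I' \<subseteq> {1..n} \<Longrightarrow> card I' = card I \<Longrightarrow> I' \<noteq> I \<Longrightarrow> pI n I' \<subseteq> off_component n I"
  unfolding off_component_def by (blast intro: addcl.base)

lemma off_component_add:
  "x \<in> off_component n I \<Longrightarrow> y \<in> off_component n I \<Longrightarrow> x + y \<in> off_component n I"
  unfolding off_component_def by (rule addcl.add)

lemma theta_components:
  assumes J: "J \<subseteq> {1..n}" and ij: "i \<in> J" "j \<in> J" "i \<noteq> j"
  defines "a \<equiv> smul (sy i - sone) (eI (J - {i})) :: 'k::comm_ring_1 sel"
    and "b \<equiv> smul (sx j - sone) (eI (J - {j})) :: 'k sel"
  shows "theta i j J - sone = a + b + smul a b"
    and "a \<in> pI n (J - {i})" "b \<in> pI n (J - {j})"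
    and "smul a b \<in> pI n (J - {i})" "smul a b \<in> pI n (J - {j})"
proof -
  have sy: "sy i - sone \<in> (Sn n :: 'k sel set)" and sx: "sx j - sone \<in> (Sn n :: 'k sel set)"
    using J ij by (auto intro!: SC_diff SC_sy SC_sx SC_sone)
  have "finite J" using J finite_subset by blast
  then have b: "b \<in> Sn n"
    unfolding b_def using J sx by (intro SC_smul SC_eI) auto
  have fin: "finite (supp a)" "finite (supp b)"
    unfolding a_def b_def by (simp_all add: finite_supp_intros)
  show "theta i j J - sone = a + b + smul a b"
    unfolding theta_def a_def[symmetric] b_def[symmetric]
    by (rule to_mring_inject) (simp_all add: fin finite_supp_intros to_mring_smul to_mring_add
        to_mring_diff to_mring_sone algebra_simps)
  have a_eq: "a = smul (smul (sy i - sone) (eI (J - {i}))) sone"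
    and b_eq: "b = smul (smul (sx j - sone) (eI (J - {j}))) sone"
    unfolding a_def b_def
    by (rule to_mring_inject; simp add: finite_supp_intros to_mring_smul to_mring_sone)+
  show "a \<in> pI n (J - {i})" "b \<in> pI n (J - {j})"
    unfolding a_eq b_eq using sy sx by (auto intro!: pI_mem SC_sone)
  show "smul a b \<in> pI n (J - {i})"
    unfolding a_def using sy b by (rule pI_mem)
  have "smul a b = smul (smul (smul a (sx j - sone)) (eI (J - {j}))) sone"
    unfolding b_def
    by (rule to_mring_inject) (simp_all add: fin finite_supp_intros to_mring_smul to_mring_sone
        mult.assoc)
  moreover have "a \<in> Sn n"
    unfolding a_def using J ij sy \<open>finite J\<close> by (intro SC_smul SC_eI) auto
  ultimately show "smul a b \<in> pI n (J - {j})"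
    using sx by (auto intro!: pI_mem SC_smul SC_sone)
qed

lemma theta_in_one_plus_units:
  assumes "J \<subseteq> {1..n}" "i \<in> J" "j \<in> J" "i \<noteq> j"
  shows "(theta i j J :: 'k::comm_ring_1 sel) \<in> one_plus_units n (aid n (card J - 1))"
proof -
  note c = theta_components[OF assms, where 'k='k]
  have "finite J" using assms(1) finite_subset by blast
  then have "pI n (J - {i}) \<subseteq> (aid n (card J - 1) :: 'k sel set)"
    "pI n (J - {j}) \<subseteq> (aid n (card J - 1) :: 'k sel set)"
    using assms by (intro pI_subset_aid; auto)+
  then have "(theta i j J :: 'k sel) - sone \<in> aid n (card J - 1)"
    unfolding c(1) using c(2-4) by (blast intro: aid_add)
  then show ?thesis
    using theta_sunit[OF assms] by (simp add: one_plus_units_def)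
qed

lemma theta_residue_at_J_minus_i:
  assumes "J \<subseteq> {1..n}" "i \<in> J" "j \<in> J" "i \<noteq> j"
  shows "(theta i j J - sone) - smul (sy i - sone) (eI (J - {i}))
     \<in> (off_component n (J - {i}) :: 'k::comm_ring_1 sel set)"
proof -
  note c = theta_components[OF assms, where 'k='k]
  have "finite J" using assms(1) finite_subset by blast
  then have "pI n (J - {j}) \<subseteq> (off_component n (J - {i}) :: 'k sel set)"
    using assms by (intro pI_subset_off_component) auto
  then show ?thesis
    unfolding c(1) using c(3,5) by (simp add: add.assoc off_component_add subsetD)
qed

lemma theta_residue_at_J_minus_j:
  assumes "J \<subseteq> {1..n}" "i \<in> J" "j \<in> J" "i \<noteq> j"
  shows "(theta i j J - sone) - smul (sx j - sone) (eI (J - {j}))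
     \<in> (off_component n (J - {j}) :: 'k::comm_ring_1 sel set)"
proof -
  note c = theta_components[OF assms, where 'k='k]
  have "finite J" using assms(1) finite_subset by blast
  then have "pI n (J - {i}) \<subseteq> (off_component n (J - {j}) :: 'k sel set)"
    using assms by (intro pI_subset_off_component) auto
  then show ?thesis
    unfolding c(1) using c(2,4) by (simp add: add.commute add.left_commute off_component_add subsetD)
qed

lemma theta_residue_elsewhere:
  assumes "J \<subseteq> {1..n}" "i \<in> J" "j \<in> J" "i \<noteq> j"
    and "card I = card J - 1" "I \<noteq> J - {i}" "I \<noteq> J - {j}"
  shows "theta i j J - sone \<in> (off_component n I :: 'k::comm_ring_1 sel set)"
proof -
  note c = theta_components[OF assms(1-4), where 'k='k]
  have "finite J" using assms(1) finite_subset by blast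
  then have "pI n (J - {i}) \<subseteq> (off_component n I :: 'k sel set)"
    "pI n (J - {j}) \<subseteq> (off_component n I :: 'k sel set)"
    using assms by (intro pI_subset_off_component; auto)+
  then show ?thesis
    unfolding c(1) using c(2-4) by (blast intro: off_component_add)
qed

section \<open>A representation separating the component \<open>\<pp>\<^sub>I\<close>\<close>

text \<open>The monoid ring acts on \<open>K[\<int>\<^sup>\<nat>]\<close>: a monomial \<open>x\<^sup>\<alpha>y\<^sup>\<beta>\<close> sends the lattice point \<open>w\<close>
  to \<open>w + \<alpha> - \<beta>\<close>, except that it kills \<open>w\<close> when some coordinate in \<open>I\<close> would become negative
  on the way (i.e. \<open>w k < \<beta> k\<close> for some \<open>k \<in> I\<close>). For \<open>k \<notin> I\<close> the generators \<open>x\<^sub>k, y\<^sub>k\<close>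
  act invertibly, so \<open>e\<^sub>k\<close> acts as zero and so does every \<open>\<pp>\<^sub>I\<^sub>'\<close> with \<open>I'\<close> not contained
  in \<open>I\<close>; on the coordinates in \<open>I\<close> the elements \<open>E\<^sub>\<alpha>\<^sub>\<beta>(I)\<close> act as matrix units.\<close>

definition lattice_act :: "nat set \<Rightarrow> bicyc \<Rightarrow> (nat \<Rightarrow> int) \<Rightarrow> (nat \<Rightarrow> int) option" where
  "lattice_act I m w = (if \<forall>k\<in>I. int (snd (mono_of m) k) \<le> w k
      then Some (\<lambda>k. w k + int (fst (mono_of m) k) - int (snd (mono_of m) k)) else None)"

definition act_term :: "nat set \<Rightarrow> bicyc \<Rightarrow> (nat \<Rightarrow> int) \<Rightarrow> 'k::comm_ring_1
    \<Rightarrow> ((nat \<Rightarrow> int) \<Rightarrow>\<^sub>0 'k)" where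
  "act_term I m w c = (case lattice_act I m w of None \<Rightarrow> 0 | Some w' \<Rightarrow> Poly_Mapping.single w' c)"

definition rep :: "nat set \<Rightarrow> (bicyc \<Rightarrow>\<^sub>0 'k::comm_ring_1)
    \<Rightarrow> ((nat \<Rightarrow> int) \<Rightarrow>\<^sub>0 'k) \<Rightarrow> ((nat \<Rightarrow> int) \<Rightarrow>\<^sub>0 'k)" where
  "rep I f v = (\<Sum>m\<in>Poly_Mapping.keys f. \<Sum>w\<in>Poly_Mapping.keys v.
      act_term I m w (Poly_Mapping.lookup f m * Poly_Mapping.lookup v w))"

lemma act_term_add: "act_term I m w (a + b) = act_term I m w a + act_term I m w b"
  by (simp add: act_term_def single_add split: option.split)

lemma act_term_zero: "act_term I m w 0 = 0"
  by (simp add: act_term_def split: option.split)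

lemma rep_expand:
  assumes "finite K" "Poly_Mapping.keys f \<subseteq> K" "finite W" "Poly_Mapping.keys v \<subseteq> W"
  shows "rep I f v =
    (\<Sum>m\<in>K. \<Sum>w\<in>W. act_term I m w (Poly_Mapping.lookup f m * Poly_Mapping.lookup v w))"
proof -
  have "rep I f v = (\<Sum>m\<in>K. \<Sum>w\<in>Poly_Mapping.keys v.
      act_term I m w (Poly_Mapping.lookup f m * Poly_Mapping.lookup v w))"
    unfolding rep_def
    by (rule sum.mono_neutral_left) (use assms in \<open>auto simp: in_keys_iff act_term_zero\<close>)
  also have "\<dots> = (\<Sum>m\<in>K. \<Sum>w\<in>W.
      act_term I m w (Poly_Mapping.lookup f m * Poly_Mapping.lookup v w))"
    by (intro sum.cong refl sum.mono_neutral_left)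
      (use assms in \<open>auto simp: in_keys_iff act_term_zero\<close>)
  finally show ?thesis .
qed

lemma rep_add_left: "rep I (f + g) v = rep I f v + rep I g v"
proof -
  let ?K = "Poly_Mapping.keys f \<union> Poly_Mapping.keys g"
  have K: "finite ?K" "Poly_Mapping.keys (f + g) \<subseteq> ?K"
    "Poly_Mapping.keys f \<subseteq> ?K" "Poly_Mapping.keys g \<subseteq> ?K"
    by (auto simp: in_keys_iff lookup_add)
  show ?thesis
    by (simp add: rep_expand[OF K(1,2) finite_keys subset_refl] rep_expand[OF K(1,3) finite_keys subset_refl]
        rep_expand[OF K(1,4) finite_keys subset_refl] lookup_add distrib_right act_term_add sum.distrib)
qed

lemma rep_add_right: "rep I f (v + v') = rep I f v + rep I f v'"
proof -
  let ?W = "Poly_Mapping.keys v \<union> Poly_Mapping.keys v'"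
  have W: "finite ?W" "Poly_Mapping.keys (v + v') \<subseteq> ?W"
    "Poly_Mapping.keys v \<subseteq> ?W" "Poly_Mapping.keys v' \<subseteq> ?W"
    by (auto simp: in_keys_iff lookup_add)
  show ?thesis
    by (simp add: rep_expand[OF finite_keys subset_refl W(1,2)] rep_expand[OF finite_keys subset_refl W(1,3)]
        rep_expand[OF finite_keys subset_refl W(1,4)] lookup_add distrib_left act_term_add sum.distrib)
qed

lemma rep_zero_left: "rep I 0 v = 0"
  and rep_zero_right: "rep I f 0 = 0"
  by (simp_all add: rep_def)

lemma rep_diff_left: "rep I (f - g) v = rep I f v - rep I g v"
  using rep_add_left[of I "f - g" g v] by (simp add: eq_diff_eq)

lemma rep_sum_left: "rep I (sum F S) v = (\<Sum>x\<in>S. rep I (F x) v)"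
  by (induct S rule: infinite_finite_induct) (auto simp: rep_zero_left rep_add_left)

lemma rep_single:
  "rep I (Poly_Mapping.single m c) (Poly_Mapping.single w d) = act_term I m w (c * d)"
  by (subst rep_expand[of "{m}" _ "{w}"]) (auto simp: act_term_zero)

lemma lattice_act_plus:
  "lattice_act I (a + b) w
     = (case lattice_act I b w of None \<Rightarrow> None | Some w' \<Rightarrow> lattice_act I a w')"
proof -
  have le: "(int b2 + int (a2 - b1) \<le> w) = (int b2 \<le> w \<and> int a2 \<le> w + int b1 - int b2)"
    for a2 b1 b2 :: nat and w :: int
    by (cases "a2 \<le> b1") auto
  have eq: "w + (int a1 + int (b1 - a2)) - (int b2 + int (a2 - b1))
      = (w + int b1 - int b2) + int a1 - int a2"
    for a1 a2 b1 b2 :: nat and w :: int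
    by (cases "a2 \<le> b1") auto
  have guard: "(\<forall>k\<in>I. int (snd (mono_of (a + b)) k) \<le> w k) \<longleftrightarrow>
     (\<forall>k\<in>I. int (snd (mono_of b) k) \<le> w k) \<and>
     (\<forall>k\<in>I. int (snd (mono_of a) k) \<le> w k + int (fst (mono_of b) k) - int (snd (mono_of b) k))"
    unfolding mono_of_plus mmul_def by (auto simp: le)
  have target: "(\<lambda>k. w k + int (fst (mono_of (a + b)) k) - int (snd (mono_of (a + b)) k)) =
     (\<lambda>k. (w k + int (fst (mono_of b) k) - int (snd (mono_of b) k))
        + int (fst (mono_of a) k) - int (snd (mono_of a) k))"
    unfolding mono_of_plus mmul_def by (simp add: eq)
  show ?thesis
    unfolding lattice_act_def guard target by auto
qed

lemma rep_single_act_term: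
  "rep I (Poly_Mapping.single a c) (act_term I b w d) = act_term I (a + b) w (c * d)"
  by (simp add: act_term_def lattice_act_plus rep_single rep_zero_right split: option.split)

lemma poly_mapping_single_induct [case_names zero add]:
  assumes "P 0"
    and "\<And>a b f. a \<notin> Poly_Mapping.keys f \<Longrightarrow> b \<noteq> 0 \<Longrightarrow> P f
      \<Longrightarrow> P (Poly_Mapping.single a b + f)"
  shows "P f"
proof (induct f rule: update_induct)
  case (update f a b)
  moreover have "Poly_Mapping.update a b f = Poly_Mapping.single a b + f"
    using update(1) by (intro poly_mapping_eqI) (auto simp: lookup_update lookup_add lookup_single in_keys_iff)
  ultimately show ?case using assms(2) by simp
qed (rule assms(1))

lemma rep_mult: "rep I (f * g) v = rep I f (rep I g v)"
proof -
  have single_single: "rep I (Poly_Mapping.single a c * Poly_Mapping.single b d) v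
      = rep I (Poly_Mapping.single a c) (rep I (Poly_Mapping.single b d) v)" for a b c d
    by (induct v rule: poly_mapping_single_induct)
      (simp_all add: rep_zero_right rep_add_right mult_single rep_single rep_single_act_term
        mult.assoc)
  have single_left: "rep I (Poly_Mapping.single a c * g) v
      = rep I (Poly_Mapping.single a c) (rep I g v)" for a c
    by (induct g rule: poly_mapping_single_induct)
      (simp_all add: rep_zero_left rep_zero_right distrib_left rep_add_left rep_add_right
        single_single)
  show ?thesis
    by (induct f rule: poly_mapping_single_induct)
      (simp_all add: rep_zero_left distrib_right rep_add_left single_left)
qed

definition rep_kills :: "nat set \<Rightarrow> 'k::comm_ring_1 sel \<Rightarrow> bool" where
  "rep_kills I f \<longleftrightarrow> finite (supp f) \<and> (\<forall>v. rep I (to_mring f) v = 0)"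

lemma rep_rmono_single:
  "rep I (rmono \<alpha> \<beta>) (Poly_Mapping.single w c) = act_term I (Abs_bicyc (\<alpha>, \<beta>)) w c"
  unfolding rmono_def by (simp add: rep_single)

lemma rep_re: "k \<notin> I \<Longrightarrow> rep I (re k) v = 0"
proof (induct v rule: poly_mapping_single_induct)
  case (add w c v)
  assume k: "k \<notin> I"
  have "lattice_act I (Abs_bicyc (delta k, delta k)) w = lattice_act I (Abs_bicyc (\<lambda>_. 0, \<lambda>_. 0)) w"
    using k unfolding lattice_act_def by (auto simp: Abs_bicyc_inverse delta_def)
  then have "rep I (re k) (Poly_Mapping.single w c) = 0"
    unfolding re_def rmono_zero[symmetric] rep_diff_left rep_rmono_single act_term_def by simp
  then show ?case using add by (simp add: rep_add_right)
qed (simp add: rep_zero_right)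

lemma rep_kills_addcl: "(\<And>x. x \<in> X \<Longrightarrow> rep_kills I x) \<Longrightarrow> x \<in> addcl X \<Longrightarrow> rep_kills I x"
proof -
  assume X: "\<And>x. x \<in> X \<Longrightarrow> rep_kills I x" and x: "x \<in> addcl X"
  from x show "rep_kills I x"
  proof induct
    case zero
    show ?case
      unfolding rep_kills_def to_mring_zero rep_zero_left using finite_supp_zero by simp
  next
    case (base x)
    then show ?case by (rule X)
  next
    case (add a b)
    then show ?case
      unfolding rep_kills_def using finite_supp_add[of a b] to_mring_add[of a b]
      by (simp add: rep_add_left)
  qed
qed

lemma rep_kills_pid: "k \<notin> I \<Longrightarrow> x \<in> pid n k \<Longrightarrow> rep_kills I x"
  unfolding pid_def ideal_gen_def
proof (erule rep_kills_addcl[rotated], clarify)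
  fix a b :: "'a sel" assume k: "k \<notin> I" and ab: "a \<in> Sn n" "b \<in> Sn n"
  then have "finite (supp a)" "finite (supp b)" using SC_finite_supp by blast+
  then show "rep_kills I (smul (smul a (ee k)) b)"
    unfolding rep_kills_def ee_def
    by (simp add: finite_supp_intros to_mring_smul to_mring_EE rE_0_0 rep_mult rep_re[OF k]
        rep_zero_right)
qed

lemma rep_kills_iprod:
  assumes "A \<subseteq> Sn n" "B \<subseteq> Sn n" "(\<forall>a\<in>A. rep_kills I a) \<or> (\<forall>b\<in>B. rep_kills I b)"
    and "x \<in> iprod A B"
  shows "rep_kills I x"
  using assms(4) unfolding iprod_def
proof (rule rep_kills_addcl[rotated], clarify)
  fix a b assume ab: "a \<in> A" "b \<in> B"
  then have "finite (supp a)" "finite (supp b)" using assms(1,2) SC_finite_supp by blast+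
  then show "rep_kills I (smul a b)"
    using assms(3) ab
    by (auto simp: rep_kills_def finite_supp_smul to_mring_smul rep_mult rep_zero_right)
qed

lemma rep_kills_pI:
  assumes "I' \<subseteq> {1..n}" "\<not> I' \<subseteq> I" "x \<in> pI n I'"
  shows "rep_kills I x"
proof -
  obtain k where k: "k \<in> I'" "k \<notin> I" using assms(2) by auto
  have "rep_kills I x" if "set L \<subseteq> {1..n}" "k \<in> set L" "x \<in> foldr iprod (map (pid n) L) (Sn n)"
    for L and x :: "'a sel"
    using that
  proof (induct L arbitrary: x)
    case (Cons l L)
    have "pid n l \<subseteq> (Sn n :: 'a sel set)" "foldr iprod (map (pid n) L) (Sn n) \<subseteq> (Sn n :: 'a sel set)"
      using Cons.prems(1) by (intro pid_subset foldr_iprod_subset; simp)+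
    moreover have "(\<forall>a\<in>pid n l. rep_kills I a)
        \<or> (\<forall>b\<in>foldr iprod (map (pid n) L) (Sn n :: 'a sel set). rep_kills I b)"
    proof (cases "l = k")
      case True
      then show ?thesis using k(2) by (auto intro: rep_kills_pid)
    next
      case False
      then have "k \<in> set L" using Cons.prems by simp
      then have "rep_kills I b" if "b \<in> foldr iprod (map (pid n) L) (Sn n)" for b :: "'a sel"
        using Cons.hyps[OF _ _ that] Cons.prems(1) by simp
      then show ?thesis by blast
    qed
    ultimately show ?case
      using Cons.prems(3) by (intro rep_kills_iprod[of "pid n l" n]) simp_all
  qed simp
  moreover have "finite I'" using assms(1) finite_subset by blast
  then have "set (sorted_list_of_set I') \<subseteq> {1..n}" "k \<in> set (sorted_list_of_set I')"
    using assms(1) k(1) by auto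
  ultimately show ?thesis using assms(3) unfolding pI_def by blast
qed

lemma rep_kills_off_component:
  fixes x :: "'k::comm_ring_1 sel"
  assumes I: "I \<subseteq> {1..n}" and x: "x \<in> off_component n I"
  shows "rep_kills I x"
proof -
  have "finite I" using I finite_subset by blast
  have pI: "rep_kills I y"
    if "y \<in> pI n I'" "I' \<subseteq> {1..n}" "card I \<le> card I'" "I' \<noteq> I" for y :: "'k sel" and I'
  proof (rule rep_kills_pI[OF that(2) _ that(1)])
    show "\<not> I' \<subseteq> I"
      using card_seteq[OF \<open>finite I\<close> _ that(3)] that(4) by blast
  qed
  have aid: "rep_kills I y" if "y \<in> aid n (card I + 1)" for y :: "'k sel"
    using that unfolding aid_def
  proof (rule rep_kills_addcl[rotated])
    fix z :: "'k sel" assume "z \<in> \<Union> {pI n I' | I'. I' \<subseteq> {1..n} \<and> card I' = card I + 1}"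
    then obtain I' where "z \<in> pI n I'" "I' \<subseteq> {1..n}" "card I' = card I + 1" by blast
    then show "rep_kills I z" by (intro pI) auto
  qed
  show ?thesis
    using x unfolding off_component_def
  proof (rule rep_kills_addcl[rotated])
    fix z :: "'k sel"
    assume "z \<in> \<Union> {pI n I' | I'. I' \<subseteq> {1..n} \<and> card I' = card I \<and> I' \<noteq> I} \<union> aid n (card I + 1)"
    then show "rep_kills I z"
    proof
      assume "z \<in> \<Union> {pI n I' | I'. I' \<subseteq> {1..n} \<and> card I' = card I \<and> I' \<noteq> I}"
      then obtain I' where "z \<in> pI n I'" "I' \<subseteq> {1..n}" "card I' = card I" "I' \<noteq> I" by blast
      then show ?thesis by (intro pI) auto
    qed (rule aid)
  qed
qed

definition nonneg_on :: "nat set \<Rightarrow> (nat \<Rightarrow> int) \<Rightarrow> bool" where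
  "nonneg_on I w \<longleftrightarrow> (\<forall>k\<in>I. 0 \<le> w k)"

lemma rep_one: "nonneg_on I w \<Longrightarrow> rep I 1 (Poly_Mapping.single w c) = Poly_Mapping.single w c"
  unfolding rmono_zero[symmetric] rep_rmono_single act_term_def
  by (simp add: lattice_act_def Abs_bicyc_inverse nonneg_on_def)

lemma rep_rE:
  assumes "k \<in> I" "nonneg_on I w"
  shows "rep I (rE s t k) (Poly_Mapping.single w 1)
    = (if w k = int t then Poly_Mapping.single (w(k := int s)) 1 else 0)"
proof -
  have act: "lattice_act I (Abs_bicyc (\<lambda>l. if l = k then s else 0, \<lambda>l. if l = k then t else 0)) w
       = (if int t \<le> w k then Some (w(k := w k + int s - int t)) else None)" for s t
    using assms by (auto simp: lattice_act_def Abs_bicyc_inverse nonneg_on_def fun_eq_iff)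
  show ?thesis
    unfolding rE_def rep_diff_left rep_rmono_single act_term_def act by (auto simp: algebra_simps)
qed

lemma rep_rE_list:
  assumes "distinct L" "set L \<subseteq> I" "nonneg_on I w"
  shows "rep I (foldr (*) (map (\<lambda>k. rE (\<alpha> k) (\<beta> k) k) L) 1) (Poly_Mapping.single w (1::'k::comm_ring_1))
    = (if \<forall>k\<in>set L. w k = int (\<beta> k)
       then Poly_Mapping.single (\<lambda>l. if l \<in> set L then int (\<alpha> l) else w l) 1 else 0)"
  using assms
proof (induct L)
  case Nil
  then show ?case by (simp add: rep_one)
next
  case (Cons k L)
  let ?w' = "\<lambda>l. if l \<in> set L then int (\<alpha> l) else w l"
  have "k \<in> I" "k \<notin> set L" "nonneg_on I ?w'"
    using Cons.prems by (auto simp: nonneg_on_def)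
  then have "rep I (rE (\<alpha> k) (\<beta> k) k) (Poly_Mapping.single ?w' (1::'k))
      = (if w k = int (\<beta> k) then Poly_Mapping.single (?w'(k := int (\<alpha> k))) 1 else 0)"
    by (simp add: rep_rE)
  then show ?case
    using Cons by (auto simp: rep_mult rep_zero_right fun_eq_iff
        intro!: arg_cong2[where f = Poly_Mapping.single])
qed

lemma rep_EI:
  assumes "finite I" "nonneg_on I w"
  shows "rep I (to_mring (EI \<alpha> \<beta> I)) (Poly_Mapping.single w (1::'k::comm_ring_1))
    = (if \<forall>k\<in>I. w k = int (\<beta> k)
       then Poly_Mapping.single (\<lambda>l. if l \<in> I then int (\<alpha> l) else w l) 1 else 0)"
proof -
  have "rep I (foldr (*) (map (\<lambda>k. rE (\<alpha> k) (\<beta> k) k) (sorted_list_of_set I)) 1)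
      (Poly_Mapping.single w (1::'k))
    = (if \<forall>k\<in>set (sorted_list_of_set I). w k = int (\<beta> k)
       then Poly_Mapping.single (\<lambda>l. if l \<in> set (sorted_list_of_set I) then int (\<alpha> l) else w l) 1
       else 0)"
    by (rule rep_rE_list) (use assms in auto)
  then show ?thesis unfolding to_mring_EI using assms(1) by simp
qed

definition mono_exponent :: "mono \<Rightarrow> nat \<Rightarrow> int" where
  "mono_exponent m = (\<lambda>l. int (fst m l) - int (snd m l))"

lemma rep_SC:
  assumes A: "A \<in> SC C" and CI: "C \<inter> I = {}" and w: "nonneg_on I w"
  shows "rep I (to_mring A) (Poly_Mapping.single w 1)
    = (\<Sum>m\<in>supp A. Poly_Mapping.single (\<lambda>l. w l + mono_exponent m l) (A m))"
proof -
  have fA: "finite (supp A)" using A SC_finite_supp by blast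
  have "rep I (to_mring A) (Poly_Mapping.single w 1) = (\<Sum>b\<in>Abs_bicyc ` supp A. \<Sum>w'\<in>{w}.
      act_term I b w' (Poly_Mapping.lookup (to_mring A) b * Poly_Mapping.lookup (Poly_Mapping.single w 1) w'))"
    by (rule rep_expand) (simp_all add: fA keys_to_mring)
  also have "\<dots> = (\<Sum>m\<in>supp A. act_term I (Abs_bicyc m) w (A m))"
    by (subst sum.reindex) (auto simp: inj_on_def Abs_bicyc_inject lookup_to_mring[OF fA] Abs_bicyc_inverse)
  also have "\<dots> = (\<Sum>m\<in>supp A. Poly_Mapping.single (\<lambda>l. w l + mono_exponent m l) (A m))"
  proof (rule sum.cong[OF refl])
    fix m assume "m \<in> supp A"
    then have "\<forall>k\<in>I. snd m k = 0" using A CI by (auto simp: SC_def mono_on_def)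
    then show "act_term I (Abs_bicyc m) w (A m) = Poly_Mapping.single (\<lambda>l. w l + mono_exponent m l) (A m)"
      using w by (simp add: act_term_def lattice_act_def Abs_bicyc_inverse nonneg_on_def
          mono_exponent_def add_diff_eq)
  qed
  finally show ?thesis .
qed

definition Irep_sum :: "nat set \<Rightarrow> ((nat \<Rightarrow> nat) \<Rightarrow> (nat \<Rightarrow> nat) \<Rightarrow> 'k::comm_ring_1 sel) \<Rightarrow> 'k sel"
  where "Irep_sum I A = (\<Sum>(\<alpha>, \<beta>) \<in> {(\<alpha>, \<beta>). A \<alpha> \<beta> \<noteq> 0}. smul (A \<alpha> \<beta>) (EI \<alpha> \<beta> I))"

definition vanishes_off :: "nat set \<Rightarrow> (nat \<Rightarrow> nat) \<Rightarrow> bool" where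
  "vanishes_off I \<alpha> \<longleftrightarrow> (\<forall>k. k \<notin> I \<longrightarrow> \<alpha> k = 0)"

lemma shifted_point_eq_iff:
  assumes m: "mono_on C m" and CI: "C \<inter> I = {}"
    and \<alpha>: "vanishes_off I \<alpha>" and \<alpha>0: "vanishes_off I \<alpha>0" and D: "\<forall>k\<in>I. D k = 0"
  shows "(\<lambda>l. int (\<alpha> l) + mono_exponent m l) = (\<lambda>k. int (\<alpha>0 k) + D k)
    \<longleftrightarrow> \<alpha> = \<alpha>0 \<and> mono_exponent m = D"
proof
  have m: "\<forall>k\<in>I. mono_exponent m k = 0"
    using m CI by (auto simp: mono_on_def mono_exponent_def)
  assume eq: "(\<lambda>l. int (\<alpha> l) + mono_exponent m l) = (\<lambda>k. int (\<alpha>0 k) + D k)"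
  have "\<alpha> k = \<alpha>0 k" for k
  proof (cases "k \<in> I")
    case True
    then show ?thesis using fun_cong[OF eq, of k] m D by auto
  next
    case False
    then show ?thesis using \<alpha> \<alpha>0 by (auto simp: vanishes_off_def)
  qed
  then show "\<alpha> = \<alpha>0 \<and> mono_exponent m = D" using eq by (auto simp: fun_eq_iff)
qed auto

lemma rep_coefficient_term:
  fixes A :: "'k::comm_ring_1 sel"
  assumes I: "finite I" and A: "A \<in> SC C" and CI: "C \<inter> I = {}"
    and \<alpha>: "vanishes_off I \<alpha>" and \<beta>: "vanishes_off I \<beta>"
    and \<alpha>0: "vanishes_off I \<alpha>0" and \<beta>0: "vanishes_off I \<beta>0" and D: "\<forall>k\<in>I. D k = 0"
  shows "Poly_Mapping.lookup (rep I (to_mring (smul A (EI \<alpha> \<beta> I)))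
      (Poly_Mapping.single (\<lambda>k. int (\<beta>0 k)) 1)) (\<lambda>k. int (\<alpha>0 k) + D k)
    = (if \<alpha> = \<alpha>0 \<and> \<beta> = \<beta>0 then (\<Sum>m\<in>{m\<in>supp A. mono_exponent m = D}. A m) else 0)"
proof -
  have fA: "finite (supp A)" using A SC_finite_supp by blast
  have "(\<forall>k\<in>I. int (\<beta>0 k) = int (\<beta> k)) \<longleftrightarrow> \<beta> = \<beta>0"
    using \<beta> \<beta>0 unfolding vanishes_off_def by (auto simp: fun_eq_iff) metis
  moreover have "(\<lambda>l. if l \<in> I then int (\<alpha> l) else int (\<beta>0 l)) = (\<lambda>l. int (\<alpha> l))"
    using \<alpha> \<beta>0 unfolding vanishes_off_def by (auto simp: fun_eq_iff)
  ultimately have r: "rep I (to_mring (smul A (EI \<alpha> \<beta> I))) (Poly_Mapping.single (\<lambda>k. int (\<beta>0 k)) 1)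
      = (if \<beta> = \<beta>0 then rep I (to_mring A) (Poly_Mapping.single (\<lambda>l. int (\<alpha> l)) 1) else 0)"
    unfolding to_mring_smul[OF fA finite_supp_EI] rep_mult
    by (simp add: rep_EI[OF I] nonneg_on_def rep_zero_right)
  have exponent: "(\<lambda>l. int (\<alpha> l) + mono_exponent m l) = (\<lambda>k. int (\<alpha>0 k) + D k)
      \<longleftrightarrow> \<alpha> = \<alpha>0 \<and> mono_exponent m = D" if "m \<in> supp A" for m
    using A that by (intro shifted_point_eq_iff[OF _ CI \<alpha> \<alpha>0 D]) (simp add: SC_def)
  have "Poly_Mapping.lookup (rep I (to_mring A) (Poly_Mapping.single (\<lambda>l. int (\<alpha> l)) 1))
        (\<lambda>k. int (\<alpha>0 k) + D k)
      = (\<Sum>m\<in>supp A. if \<alpha> = \<alpha>0 \<and> mono_exponent m = D then A m else 0)"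
    unfolding rep_SC[OF A CI, of "\<lambda>l. int (\<alpha> l)", unfolded nonneg_on_def, simplified] lookup_sum
    by (auto simp: lookup_single when_def exponent intro!: sum.cong)
  also have "\<dots> = (if \<alpha> = \<alpha>0 then (\<Sum>m\<in>{m\<in>supp A. mono_exponent m = D}. A m) else 0)"
    using fA by (auto simp: sum.inter_filter)
  finally show ?thesis using r by auto
qed

lemma lookup_expo:
  assumes "mono_on {1..n} m"
  shows "Poly_Mapping.lookup (expo m) = mono_exponent m"
proof -
  have "finite {k. int (fst m k) - int (snd m k) \<noteq> 0}"
    by (rule finite_subset[of _ "{1..n}"]) (use assms in \<open>auto simp: mono_on_def\<close>)
  then show ?thesis unfolding expo_def mono_exponent_def by (simp add: Abs_poly_mapping_inverse)
qed

lemma lookup_lphi: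
  assumes "f \<in> SC {1..n}"
  shows "Poly_Mapping.lookup (lphi f) \<delta>
    = (\<Sum>m\<in>{m\<in>supp f. mono_exponent m = Poly_Mapping.lookup \<delta>}. f m)"
proof -
  have "Poly_Mapping.lookup (lphi f) \<delta>
      = (\<Sum>m\<in>supp f. if mono_exponent m = Poly_Mapping.lookup \<delta> then f m else 0)"
    unfolding lphi_def lookup_sum
  proof (rule sum.cong[OF refl])
    fix m assume "m \<in> supp f"
    then have "Poly_Mapping.lookup (expo m) = mono_exponent m"
      using assms by (intro lookup_expo[of n]) (simp add: SC_def)
    then have "expo m = \<delta> \<longleftrightarrow> mono_exponent m = Poly_Mapping.lookup \<delta>"
      by (metis poly_mapping.lookup_inject)
    then show "Poly_Mapping.lookup (Poly_Mapping.single (expo m) (f m)) \<delta>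
        = (if mono_exponent m = Poly_Mapping.lookup \<delta> then f m else 0)"
      by (simp add: lookup_single when_def)
  qed
  also have "\<dots> = (\<Sum>m\<in>{m\<in>supp f. mono_exponent m = Poly_Mapping.lookup \<delta>}. f m)"
    using SC_finite_supp[OF assms] by (simp add: sum.inter_filter)
  finally show ?thesis .
qed

lemma is_Irep_support:
  "is_Irep n I u A \<Longrightarrow> A \<alpha> \<beta> \<noteq> 0 \<Longrightarrow> vanishes_off I \<alpha> \<and> vanishes_off I \<beta>"
  by (simp add: is_Irep_def vanishes_off_def)

lemma lookup_rep_Irep_sum:
  fixes A :: "(nat \<Rightarrow> nat) \<Rightarrow> (nat \<Rightarrow> nat) \<Rightarrow> 'k::comm_ring_1 sel"
  assumes I: "I \<subseteq> {1..n}" and A: "is_Irep n I u A"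
    and \<alpha>: "vanishes_off I \<alpha>" and \<beta>: "vanishes_off I \<beta>" and D: "\<forall>k\<in>I. D k = 0"
  shows "Poly_Mapping.lookup (rep I (to_mring (Irep_sum I A)) (Poly_Mapping.single (\<lambda>k. int (\<beta> k)) 1))
      (\<lambda>k. int (\<alpha> k) + D k)
    = (\<Sum>m\<in>{m\<in>supp (A \<alpha> \<beta>). mono_exponent m = D}. A \<alpha> \<beta> m)"
proof -
  let ?S = "{(\<alpha>, \<beta>). A \<alpha> \<beta> \<noteq> 0}"
  let ?X = "\<Sum>m\<in>{m\<in>supp (A \<alpha> \<beta>). mono_exponent m = D}. A \<alpha> \<beta> m"
  let ?coeff = "\<lambda>f. Poly_Mapping.lookup (rep I (to_mring f) (Poly_Mapping.single (\<lambda>k. int (\<beta> k)) 1))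
      (\<lambda>k. int (\<alpha> k) + D k)"
  have entries: "\<And>\<alpha> \<beta>. A \<alpha> \<beta> \<in> SC ({1..n} - I)" and fin: "finite ?S"
    using A by (auto simp: is_Irep_def)
  have "finite (supp (smul (A \<alpha>' \<beta>') (EI \<alpha>' \<beta>' I)))" for \<alpha>' \<beta>'
    using entries SC_finite_supp by (blast intro: finite_supp_smul finite_supp_EI)
  then have "?coeff (Irep_sum I A) = (\<Sum>(\<alpha>', \<beta>')\<in>?S. ?coeff (smul (A \<alpha>' \<beta>') (EI \<alpha>' \<beta>' I)))"
    unfolding Irep_sum_def
    by (simp add: to_mring_sum case_prod_beta rep_sum_left lookup_sum)
  also have "\<dots> = (\<Sum>ab\<in>?S. if ab = (\<alpha>, \<beta>) then ?X else 0)"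
  proof (intro sum.cong refl, clarify)
    fix \<alpha>' \<beta>' assume "A \<alpha>' \<beta>' \<noteq> 0"
    then have "vanishes_off I \<alpha>'" "vanishes_off I \<beta>'" using is_Irep_support[OF A] by auto
    moreover have "({1..n} - I) \<inter> I = {}" by auto
    ultimately show "?coeff (smul (A \<alpha>' \<beta>') (EI \<alpha>' \<beta>' I)) = (if (\<alpha>', \<beta>') = (\<alpha>, \<beta>) then ?X else 0)"
      using rep_coefficient_term[OF finite_subset[OF I] entries, of \<alpha>' \<beta>'] \<alpha> \<beta> D by auto
  qed
  also have "\<dots> = (if (\<alpha>, \<beta>) \<in> ?S then ?X else 0)"
    using fin by simp
  also have "\<dots> = ?X"
    by (auto simp: supp_def)
  finally show ?thesis .
qed

lemma lookup_lphi_Irep_entry: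
  fixes A :: "(nat \<Rightarrow> nat) \<Rightarrow> (nat \<Rightarrow> nat) \<Rightarrow> 'k::comm_ring_1 sel"
  assumes I: "I \<subseteq> {1..n}" and A: "is_Irep n I u A"
    and \<alpha>: "vanishes_off I \<alpha>" and \<beta>: "vanishes_off I \<beta>"
  shows "Poly_Mapping.lookup (lphi (A \<alpha> \<beta>)) \<delta>
    = (if \<forall>k\<in>I. Poly_Mapping.lookup \<delta> k = 0
       then Poly_Mapping.lookup (rep I (to_mring (Irep_sum I A)) (Poly_Mapping.single (\<lambda>k. int (\<beta> k)) 1))
         (\<lambda>k. int (\<alpha> k) + Poly_Mapping.lookup \<delta> k)
       else 0)"
proof -
  have entry: "A \<alpha> \<beta> \<in> SC ({1..n} - I)" using A by (simp add: is_Irep_def)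
  then have "A \<alpha> \<beta> \<in> SC {1..n}" using SC_mono[of "{1..n} - I" "{1..n}"] by blast
  note lookup = lookup_lphi[OF this]
  show ?thesis
  proof (cases "\<forall>k\<in>I. Poly_Mapping.lookup \<delta> k = 0")
    case True
    then show ?thesis by (simp add: lookup lookup_rep_Irep_sum[OF I A \<alpha> \<beta>])
  next
    case False
    then obtain k where k: "k \<in> I" "Poly_Mapping.lookup \<delta> k \<noteq> 0" by auto
    have "mono_exponent m k = 0" if "m \<in> supp (A \<alpha> \<beta>)" for m
      using that entry k(1) by (auto simp: SC_def mono_on_def mono_exponent_def)
    then have none: "{m\<in>supp (A \<alpha> \<beta>). mono_exponent m = Poly_Mapping.lookup \<delta>} = {}"
      using k(2) by (auto dest: fun_cong[of _ _ k])
    show ?thesis using False by (auto simp: lookup none)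
  qed
qed

lemma rep_Irep_sum:
  fixes u :: "'k::comm_ring_1 sel"
  assumes I: "I \<subseteq> {1..n}" and u: "u \<in> Sn n" and A: "is_Irep n I u A"
  shows "rep I (to_mring (Irep_sum I A)) v = rep I (to_mring (u - sone)) v"
proof -
  have "finite (supp (Irep_sum I A))"
    unfolding Irep_sum_def using A SC_finite_supp
    by (intro finite_supp_sum) (auto simp: is_Irep_def intro!: finite_supp_smul finite_supp_EI)
  moreover have "finite (supp (u - sone))"
    using u SC_finite_supp finite_supp_diff finite_supp_sone by blast
  moreover have "rep_kills I ((u - sone) - Irep_sum I A)"
    using A by (intro rep_kills_off_component[OF I]) (simp add: is_Irep_def Irep_sum_def off_component_def)
  ultimately show ?thesis
    by (simp add: rep_kills_def to_mring_diff rep_diff_left)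
qed

lemma lphi_Irep_unique:
  fixes u :: "'k::comm_ring_1 sel"
  assumes I: "I \<subseteq> {1..n}" and u: "u \<in> Sn n" and A: "is_Irep n I u A" and B: "is_Irep n I u B"
  shows "lphi (A \<alpha> \<beta>) = lphi (B \<alpha> \<beta>)"
proof (cases "vanishes_off I \<alpha> \<and> vanishes_off I \<beta>")
  case True
  then have "Poly_Mapping.lookup (lphi (A \<alpha> \<beta>)) \<delta> = Poly_Mapping.lookup (lphi (B \<alpha> \<beta>)) \<delta>" for \<delta>
    by (simp add: lookup_lphi_Irep_entry[OF I A] lookup_lphi_Irep_entry[OF I B]
        rep_Irep_sum[OF I u A] rep_Irep_sum[OF I u B])
  then show ?thesis by (rule poly_mapping_eqI)
next
  case False
  then have "A \<alpha> \<beta> = 0" "B \<alpha> \<beta> = 0" using is_Irep_support[OF A] is_Irep_support[OF B] by blast+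
  then show ?thesis by simp
qed

lemma detI_eq:
  fixes u :: "'k::comm_ring_1 sel"
  assumes "I \<subseteq> {1..n}" and "u \<in> Sn n" and "is_Irep n I u A"
  shows "detI n I u = fdet (\<lambda>\<alpha> \<beta>. lphi (A \<alpha> \<beta>))"
proof -
  have "is_Irep n I u (SOME A. is_Irep n I u A)"
    using someI[of "is_Irep n I u" A] assms(3) by simp
  then have "(\<lambda>\<alpha> \<beta>. lphi ((SOME A. is_Irep n I u A) \<alpha> \<beta>)) = (\<lambda>\<alpha> \<beta>. lphi (A \<alpha> \<beta>))"
    using lphi_Irep_unique[OF assms(1,2) _ assms(3)] by blast
  then show ?thesis unfolding detI_def Let_def by simp
qed

section \<open>Computing \<open>deg\<^sub>n\<^sub>,\<^sub>I\<^sub>,\<^sub>i\<close> from a one-entry representative\<close>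

lemma fdet_single: "fdet (\<lambda>\<alpha> \<beta>. if \<alpha> = \<gamma> \<and> \<beta> = \<gamma> then c else 0) = 1 + (c :: 'a::comm_ring_1)"
proof -
  have "{\<alpha>. \<exists>\<beta>. (if \<alpha> = \<gamma> \<and> \<beta> = \<gamma> then c else 0) \<noteq> 0 \<or> (if \<beta> = \<gamma> \<and> \<alpha> = \<gamma> then c else 0) \<noteq> 0}
      = (if c = 0 then {} else {\<gamma>})"
    by auto
  then show ?thesis unfolding fdet_def Let_def by simp
qed

lemma degI_eq:
  assumes "detI n I u = Poly_Mapping.single \<gamma> c" and "c \<noteq> (0::'k::comm_ring_1)"
  shows "degI n I i u = Poly_Mapping.lookup \<gamma> i"
proof -
  have "(THE \<gamma>'. \<exists>c. c \<noteq> 0 \<and> detI n I u = Poly_Mapping.single \<gamma>' c) = \<gamma>"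
  proof (rule the_equality)
    fix \<gamma>' assume "\<exists>c'. c' \<noteq> 0 \<and> detI n I u = Poly_Mapping.single \<gamma>' c'"
    then obtain c' where "c' \<noteq> 0" "Poly_Mapping.single \<gamma>' c' = Poly_Mapping.single \<gamma> c"
      using assms(1) by auto
    then show "\<gamma>' = \<gamma>" by (metis lookup_single_eq lookup_single_not_eq)
  qed (use assms in blast)
  then show ?thesis unfolding degI_def by simp
qed

lemma is_Irep_single_entry:
  fixes u g :: "'k::comm_ring_1 sel"
  assumes g: "g \<in> SC ({1..n} - I)"
    and res: "(u - sone) - smul g (eI I) \<in> off_component n I"
  shows "is_Irep n I u (\<lambda>\<alpha> \<beta>. if \<alpha> = (\<lambda>_. 0) \<and> \<beta> = (\<lambda>_. 0) then g else 0)"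
proof -
  have support: "{(\<alpha>, \<beta>). (if \<alpha> = (\<lambda>_. 0) \<and> \<beta> = (\<lambda>_. 0) then g else 0) \<noteq> 0}
      = (if g = 0 then {} else {(\<lambda>_. 0, \<lambda>_. 0)})"
    by auto
  have "EI (\<lambda>_. 0) (\<lambda>_. 0) I = (eI I :: 'k sel)"
    by (simp add: EI_def eI_def ee_def[abs_def])
  then show ?thesis
    unfolding is_Irep_def support using g res
    by (cases "g = 0") (simp_all add: off_component_def SC_zero smul_zero_left)
qed

lemma degI_single_entry:
  fixes u g :: "'k::comm_ring_1 sel"
  assumes I: "I \<subseteq> {1..n}" and u: "u \<in> Sn n" and g: "g \<in> SC ({1..n} - I)"
    and res: "(u - sone) - smul g (eI I) \<in> off_component n I"
    and det: "1 + lphi g = Poly_Mapping.single \<gamma> c" "c \<noteq> 0"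
  shows "degI n I i u = Poly_Mapping.lookup \<gamma> i"
proof (rule degI_eq[OF _ det(2)])
  have "lphi (0 :: 'k sel) = 0" by (simp add: lphi_def supp_def)
  then have entries: "(\<lambda>\<alpha> \<beta>. lphi (if \<alpha> = (\<lambda>_. 0) \<and> \<beta> = (\<lambda>_. 0) then g else 0))
      = (\<lambda>\<alpha> \<beta>. if \<alpha> = (\<lambda>_. 0) \<and> \<beta> = (\<lambda>_. 0) then lphi g else 0)"
    by (auto simp: fun_eq_iff)
  show "detI n I u = Poly_Mapping.single \<gamma> c"
    unfolding detI_eq[OF I u is_Irep_single_entry[OF g res]] entries fdet_single det(1) ..
qed

lemma expo_mono1: "expo mono1 = 0"
  by (rule poly_mapping_eqI) (simp add: expo_def mono1_def Abs_poly_mapping_inverse)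

lemma one_plus_lphi_minus_sone:
  fixes m :: mono
  assumes "m \<noteq> mono1"
  shows "1 + lphi ((\<lambda>m'. if m' = m then 1 else 0) - sone) = Poly_Mapping.single (expo m) (1::'k::comm_ring_1)"
proof -
  have "supp ((\<lambda>m'. if m' = m then 1 else 0) - (sone :: 'k sel)) = {m, mono1}"
    using assms by (auto simp: supp_def sone_def)
  then show ?thesis
    using assms by (simp add: lphi_def sone_def expo_mono1 single_uminus)
qed

lemma one_plus_lphi_sx: "1 + lphi (sx k - sone) = Poly_Mapping.single (Poly_Mapping.single k 1) (1::'k::comm_ring_1)"
proof -
  have "expo (delta k, \<lambda>_. 0) = Poly_Mapping.single k 1"
    by (rule poly_mapping_eqI)
      (auto simp: expo_def delta_def lookup_single when_def Abs_poly_mapping_inverse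
        intro!: finite_subset[of _ "{k}"])
  moreover have "(delta k, \<lambda>_. 0) \<noteq> mono1" by (auto simp: mono1_def delta_def fun_eq_iff)
  ultimately show ?thesis
    using one_plus_lphi_minus_sone[of "(delta k, \<lambda>_. 0)"] by (simp add: sx_def[abs_def])
qed

lemma one_plus_lphi_sy: "1 + lphi (sy k - sone) = Poly_Mapping.single (Poly_Mapping.single k (-1)) (1::'k::comm_ring_1)"
proof -
  have "expo (\<lambda>_. 0, delta k) = Poly_Mapping.single k (-1)"
    by (rule poly_mapping_eqI)
      (auto simp: expo_def delta_def lookup_single when_def Abs_poly_mapping_inverse
        intro!: finite_subset[of _ "{k}"])
  moreover have "(\<lambda>_. 0, delta k) \<noteq> mono1" by (auto simp: mono1_def delta_def fun_eq_iff)
  ultimately show ?thesis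
    using one_plus_lphi_minus_sone[of "(\<lambda>_. 0, delta k)"] by (simp add: sy_def[abs_def])
qed

lemma degI_theta:
  assumes J: "J \<subseteq> {1..n}" and ij: "i \<in> J" "j \<in> J" "i \<noteq> j"
    and I: "I \<subseteq> {1..n}" "card I = card J - 1"
  shows "degI n I l (theta i j J :: 'k::comm_ring_1 sel) =
    (if I = J - {i} \<and> l = i then -1 else if I = J - {j} \<and> l = j then 1 else 0)"
proof -
  have u: "theta i j J \<in> (Sn n :: 'k sel set)"
    using theta_sunit[OF J ij, where 'k='k] by (simp add: sunit_def)
  consider "I = J - {i}" | "I = J - {j}" | "I \<noteq> J - {i}" "I \<noteq> J - {j}" by blast
  then show ?thesis
  proof cases
    case 1
    have "sy i - sone \<in> (SC ({1..n} - I) :: 'k sel set)"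
      using 1 J ij by (auto intro!: SC_diff SC_sy SC_sone)
    moreover have "theta i j J - sone - smul (sy i - sone) (eI I) \<in> (off_component n I :: 'k sel set)"
      unfolding 1 by (rule theta_residue_at_J_minus_i[OF J ij])
    ultimately have "degI n I l (theta i j J :: 'k sel) = Poly_Mapping.lookup (Poly_Mapping.single i (-1)) l"
      by (rule degI_single_entry[OF I(1) u _ _ one_plus_lphi_sy one_neq_zero])
    then show ?thesis using 1 ij by (auto simp: lookup_single)
  next
    case 2
    have "sx j - sone \<in> (SC ({1..n} - I) :: 'k sel set)"
      using 2 J ij by (auto intro!: SC_diff SC_sx SC_sone)
    moreover have "theta i j J - sone - smul (sx j - sone) (eI I) \<in> (off_component n I :: 'k sel set)"
      unfolding 2 by (rule theta_residue_at_J_minus_j[OF J ij])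
    ultimately have "degI n I l (theta i j J :: 'k sel) = Poly_Mapping.lookup (Poly_Mapping.single j 1) l"
      by (rule degI_single_entry[OF I(1) u _ _ one_plus_lphi_sx one_neq_zero])
    then show ?thesis using 2 ij by (auto simp: lookup_single)
  next
    case 3
    have "theta i j J - sone - smul 0 (eI I) \<in> (off_component n I :: 'k sel set)"
      using theta_residue_elsewhere[OF J ij I(2) 3] by (simp add: smul_zero_left)
    moreover have "1 + lphi (0 :: 'k sel) = Poly_Mapping.single 0 1" by (simp add: lphi_def supp_def)
    ultimately have "degI n I l (theta i j J :: 'k sel) = Poly_Mapping.lookup 0 l"
      by (rule degI_single_entry[OF I(1) u SC_zero _ _ one_neq_zero])
    then show ?thesis using 3 by simp
  qed
qed

theorem lemma5p9:
  fixes n s :: nat and I J :: "nat set" and i j :: nat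
  assumes "n \<ge> 3" and "1 \<le> s" and "s \<le> n - 1"
    and "I \<subseteq> {1..n}" and "J \<subseteq> {1..n}"
    and "card I = s" and "card J = s + 1" and "n \<in> J"
    and "i \<in> {1..n} - I" and "j \<in> J - {Max (J - {n})}"
  shows "(theta (Max (J - {n})) j J :: 'k::field sel) \<in> one_plus_units n (aid n s)
       \<and> degI n I i (theta (Max (J - {n})) j J :: 'k sel) =
           (if I = J - {Max (J - {n})} \<and> i = Max (J - {n}) then -1
            else if I = J - {j} \<and> i = j then 1 else 0)"
proof -
  have "finite J" using assms(5) finite_subset by blast
  moreover have "J - {n} \<noteq> {}"
    using assms(2,7) card_mono[OF finite.insertI[OF finite.emptyI], of J n] by auto
  ultimately have m: "Max (J - {n}) \<in> J" by (meson DiffD1 Max_in finite_Diff)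
  have j: "j \<in> J" "Max (J - {n}) \<noteq> j" using assms(10) by auto
  show ?thesis
  proof
    show "(theta (Max (J - {n})) j J :: 'k sel) \<in> one_plus_units n (aid n s)"
      using theta_in_one_plus_units[OF assms(5) m j] assms(7) by simp
    have "card I = card J - 1" using assms(6,7) by simp
    then show "degI n I i (theta (Max (J - {n})) j J :: 'k sel) =
        (if I = J - {Max (J - {n})} \<and> i = Max (J - {n}) then -1
         else if I = J - {j} \<and> i = j then 1 else 0)"
      by (rule degI_theta[OF assms(5) m j assms(4)])
  qed
qed

end
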